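(* For every $\mu\in\mathrm{Prob}(\mathcal{X}^n)$ with marginals $\mu_1,\dots,\mu_n\in\mathrm{Prob}(\mathcal{X})$, $$\mathcal{I}_\mathrm{sym}(\mu)=I_\mathrm{sym}(\mu)=-S(\mu)+\sum_{i=1}^nS(\mu_i).$$
   Context: $\mathcal{X}=\{t_1,\dots,t_d\}$ is a finite set with a fixed order $t_1<\dots<t_d$; $n\in\mathbb{N}$. $\mathrm{Prob}(\mathcal{X}^k)$ is the set of probability measures on $\mathcal{X}^k$, $C_\mathbb{R}(\mathcal{X}^n)$ the real functions on $\mathcal{X}^n$; $\mu(h)=\sum_\mathbf{x}h(\mathbf{x})\mu(\mathbf{x})$; $\mu_i$ is the $i$th marginal. Shannon entropy: $S(\mu)=-\sum_t\mu(t)\log\mu(t)$. For a sequence $\mathbf{x}=(x_1,\dots,x_N)$ over a finite set $A$ (here $A=\mathcal{X}$ or $\mathcal{X}^n$), its type is $\nu_\mathbf{x}(t)=\#\{j:x_j=t\}/N$, $t\in A$; for $\mu\in\mathrm{Prob}(A)$, $\Delta(\mu;N,\delta)$ is the set of $\mathbf{x}\in A^N$ with $|\nu_\mathbf{x}(t)-\mu(t)|<\delta$ for all $t\in A$; an $n$-tuple $(\mathbf{x}_1,\dots,\mathbf{x}_n)\in(\mathcal{X}^N)^n$ is identified with the sequence $((x_{1j},\dots,x_{nj}))_{j=1}^N\in(\mathcal{X}^n)^N$. $\mathcal{X}_\le^N$ is the set of sequences in $\mathcal{X}^N$ of the form $(t_1,\dots,t_1,\dots,t_d,\dots,t_d)$.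 $S_N$ acts by $\sigma(\mathbf{x})=(x_{\sigma^{-1}(1)},\dots,x_{\sigma^{-1}(N)})$; $\gamma_{S_N}$ is uniform probability on $S_N$. An approximating sequence for $(\mu_1,\dots,\mu_n)$ is $\Xi(N)=(\xi_1(N),\dots,\xi_n(N))$ with $\xi_i(N)\in\mathcal{X}_\le^N$ and $\nu_{\xi_i(N)}(t)\to\mu_i(t)$ for all $t$. $\Delta_\mathrm{sym}(\mu:\Xi(N);N,\delta)$ is the set of $(\sigma_1,\dots,\sigma_n)\in S_N^n$ with $(\sigma_1(\xi_1(N)),\dots,\sigma_n(\xi_n(N)))\in\Delta(\mu;N,\delta)$, and $I_\mathrm{sym}(\mu)=-\lim_{\delta\searrow0}\limsup_{N\to\infty}\frac1N\log\gamma_{S_N}^{\otimes n}(\Delta_\mathrm{sym}(\mu:\Xi(N);N,\delta))$. For $h\in C_\mathbb{R}(\mathcal{X}^n)$, $\kappa_N(h(\mathbf{x}_1,\dots,\mathbf{x}_n))=\frac1N\sum_{j=1}^Nh(x_{1j},\dots,x_{nj})$, the mutual pressure is $$P_\mathrm{sym}(h:\mu_1,\dots,\mu_n)=\limsup_{N\to\infty}\frac1N\log\Biggl[\frac1{(N!)^n}\sum_{\sigma_1,\dots,\sigma_n\in S_N}\exp\bigl(N\kappa_N(h(\sigma_1(\xi_1(N)),\dots,\sigma_n(\xi_n(N))))\bigr)\Biggr],$$ and $\mathcal{I}_\mathrm{sym}(\mu)=\sup\{\mu(h)-P_\mathrm{sym}(h:\mu_1,\dots,\mu_n):h\in C_\mathbb{R}(\mathcal{X}^n)\}$.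 These do not depend on the approximating sequence. *)

theory Defs
  imports "HOL-Analysis.Analysis" "HOL-Combinatorics.Permutations"
begin

text \<open>The finite ordered alphabet X is a type 'a :: {finite, linorder}; the index set
{1..n} is a finite type 'i (so X^n is 'i \<Rightarrow> 'a). Sequences of length N over A
are functions nat \<Rightarrow> A, indices 0..N-1.\<close>

definition is_prob :: "('b::finite \<Rightarrow> real) \<Rightarrow> bool" where
  "is_prob \<mu> \<longleftrightarrow> (\<forall>x. \<mu> x \<ge> 0) \<and> (\<Sum>x\<in>UNIV. \<mu> x) = 1"

definition marginal :: "(('i::finite \<Rightarrow> 'a::finite) \<Rightarrow> real) \<Rightarrow> 'i \<Rightarrow> 'a \<Rightarrow> real" where
  "marginal \<mu> i t = (\<Sum>x\<in>{x. x i = t}. \<mu> x)"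

definition entropy :: "('b::finite \<Rightarrow> real) \<Rightarrow> real" where
  "entropy \<mu> = - (\<Sum>t\<in>UNIV. \<mu> t * ln (\<mu> t))"

definition seq_type :: "nat \<Rightarrow> (nat \<Rightarrow> 'b) \<Rightarrow> 'b \<Rightarrow> real" where
  "seq_type N x t = real (card {j\<in>{..<N}. x j = t}) / real N"

definition Delta :: "('b \<Rightarrow> real) \<Rightarrow> nat \<Rightarrow> real \<Rightarrow> (nat \<Rightarrow> 'b) set" where
  "Delta \<mu> N \<delta> = {x \<in> {..<N} \<rightarrow>\<^sub>E UNIV. \<forall>t. \<bar>seq_type N x t - \<mu> t\<bar> < \<delta>}"

definition sorted_seq :: "nat \<Rightarrow> (nat \<Rightarrow> 'a::linorder) \<Rightarrow> bool" where
  "sorted_seq N x \<longleftrightarrow> x \<in> {..<N} \<rightarrow>\<^sub>E UNIV \<and> (\<forall>i j. i \<le> j \<and> j < N \<longrightarrow> x i \<le> x j)"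

definition perms :: "nat \<Rightarrow> (nat \<Rightarrow> nat) set" where
  "perms N = {\<sigma>. \<sigma> permutes {..<N}}"

definition perm_act :: "nat \<Rightarrow> (nat \<Rightarrow> nat) \<Rightarrow> (nat \<Rightarrow> 'b) \<Rightarrow> nat \<Rightarrow> 'b" where
  "perm_act N \<sigma> x = (\<lambda>j. if j < N then x (inv \<sigma> j) else undefined)"

definition combine :: "nat \<Rightarrow> ('i \<Rightarrow> nat \<Rightarrow> 'a) \<Rightarrow> nat \<Rightarrow> ('i \<Rightarrow> 'a)" where
  "combine N xs = (\<lambda>j. if j < N then (\<lambda>i. xs i j) else undefined)"

definition approx_seq :: "('i \<Rightarrow> 'a::linorder \<Rightarrow> real) \<Rightarrow> (nat \<Rightarrow> 'i \<Rightarrow> nat \<Rightarrow> 'a) \<Rightarrow> bool" where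
  "approx_seq \<mu>s \<Xi> \<longleftrightarrow> (\<forall>N i. sorted_seq N (\<Xi> N i)) \<and>
     (\<forall>i t. (\<lambda>N. seq_type N (\<Xi> N i) t) \<longlonglongrightarrow> \<mu>s i t)"

definition Delta_sym :: "(('i::finite \<Rightarrow> 'a) \<Rightarrow> real) \<Rightarrow> (nat \<Rightarrow> 'i \<Rightarrow> nat \<Rightarrow> 'a) \<Rightarrow> nat \<Rightarrow> real
     \<Rightarrow> ('i \<Rightarrow> nat \<Rightarrow> nat) set" where
  "Delta_sym \<mu> \<Xi> N \<delta> = {\<sigma>s \<in> (UNIV::'i set) \<rightarrow>\<^sub>E perms N.
      combine N (\<lambda>i. perm_act N (\<sigma>s i) (\<Xi> N i)) \<in> Delta \<mu> N \<delta>}"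

definition eln :: "real \<Rightarrow> ereal" where
  "eln x = (if x > 0 then ereal (ln x) else - \<infinity>)"

text \<open>Uniform product probability gamma_{S_N}^{tensor n} of Delta_sym.\<close>
definition gamma_sym :: "(('i::finite \<Rightarrow> 'a) \<Rightarrow> real) \<Rightarrow> (nat \<Rightarrow> 'i \<Rightarrow> nat \<Rightarrow> 'a) \<Rightarrow> nat \<Rightarrow> real \<Rightarrow> real" where
  "gamma_sym \<mu> \<Xi> N \<delta> = real (card (Delta_sym \<mu> \<Xi> N \<delta>)) / (fact N) ^ CARD('i)"

definition I_sym :: "(('i::finite \<Rightarrow> 'a) \<Rightarrow> real) \<Rightarrow> (nat \<Rightarrow> 'i \<Rightarrow> nat \<Rightarrow> 'a) \<Rightarrow> ereal" where
  "I_sym \<mu> \<Xi> = - Lim (at_right (0::real))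
      (\<lambda>\<delta>. limsup (\<lambda>N. ereal (1 / real N) * eln (gamma_sym \<mu> \<Xi> N \<delta>)))"

definition P_sym :: "(('i::finite \<Rightarrow> 'a) \<Rightarrow> real) \<Rightarrow> (nat \<Rightarrow> 'i \<Rightarrow> nat \<Rightarrow> 'a) \<Rightarrow> ereal" where
  "P_sym h \<Xi> = limsup (\<lambda>N. ereal ((1 / real N) * ln ((1 / (fact N) ^ CARD('i)) *
      (\<Sum>\<sigma>s\<in>(UNIV::'i set) \<rightarrow>\<^sub>E perms N.
         exp (\<Sum>j<N. h (combine N (\<lambda>i. perm_act N (\<sigma>s i) (\<Xi> N i)) j))))))"

definition calI_sym :: "(('i::finite \<Rightarrow> 'a::finite) \<Rightarrow> real) \<Rightarrow> (nat \<Rightarrow> 'i \<Rightarrow> nat \<Rightarrow> 'a) \<Rightarrow> ereal" where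
  "calI_sym \<mu> \<Xi> = (SUP h. ereal (\<Sum>x\<in>UNIV. h x * \<mu> x) - P_sym h \<Xi>)"

end

theory Submission
  imports Defs "HOL-Combinatorics.Multiset_Permutations" "HOL-Real_Asymp.Real_Asymp"
begin

(* The argument is combinatorial.
   (1) Stirling-type bounds on ln N! show that (1/N) ln of a multinomial coefficient is the
       entropy of the corresponding type up to O(ln N / N).
   (2) The S_N-orbit of a sequence is its type class; by orbit-stabilizer, a uniform average
       over S_N^n of a function of (sigma_i xi_i)_i is the uniform average over the product of
       the orbits.  Hence gamma_{S_N}^n(Delta_sym) = #{good orbit tuples} / prod_i |orbit_i|,
       and (1/N) ln prod_i |orbit_i| tends to sum_i S(mu_i).
   (3) Lower bound: we build joint sequences Y(N) of n-tuples whose coordinate sequences have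
       exactly the types of Xi(N) and whose joint type tends to mu; the whole orbit of Y(N)
       consists of good tuples, and (1/N) ln |orbit of Y(N)| tends to S(mu).
   (4) Upper bound: an exponential Chebyshev estimate with a test function h gives
       #good * exp(N (mu(h) - delta |h|_1)) <= Z(h)^N, Z(h) = sum_x exp(h x); taking
       h close to ln mu makes ln Z(h) small.
   (5) The same two estimates bound the mutual pressure P_sym(h) from both sides, and the
       supremum over h yields the value of calI_sym. *)

section \<open>Stirling-type bounds and multinomial coefficients\<close>

lemma ln_ge_one_minus_inverse: "0 < (x::real) \<Longrightarrow> 1 - 1/x \<le> ln x"
proof -
  assume x: "0 < x"
  have "ln (1/x) \<le> 1/x - 1" using x by (intro ln_le_minus_one) auto
  thus ?thesis using x by (simp add: ln_div)
qed

text \<open>Elementary two-sided bounds on \<open>ln N!\<close>, obtained by telescoping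
  \<open>1/(n+1) \<le> ln (n+1) - ln n \<le> 1/n\<close>.\<close>

lemma ln_fact_lower: "real n * ln (real n) - real n \<le> ln (fact n)"
proof (induction n)
  case 0 then show ?case by simp
next
  case (Suc n)
  show ?case
  proof (cases "n = 0")
    case True then show ?thesis by simp
  next
    case False
    hence n: "real n > 0" by simp
    have "ln (1 + 1/real n) \<le> 1 / real n" using n by (intro ln_add_one_self_le_self) auto
    moreover have "1 + 1/real n = real (Suc n) / real n" using n by (simp add: field_simps)
    ultimately have "ln (real (Suc n)) - ln (real n) \<le> 1 / real n" using n by (simp add: ln_div)
    hence step: "real n * ln (real (Suc n)) \<le> real n * ln (real n) + 1"
      using n by (simp add: field_simps)
    have "ln (fact (Suc n)) = ln (real (Suc n)) + ln (fact n)"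
      by (simp add: ln_mult fact_Suc del: of_nat_Suc)
    thus ?thesis using Suc.IH step by (simp add: algebra_simps)
  qed
qed

lemma ln_fact_upper: "ln (fact n) \<le> real n * ln (real n) - real n + 1 + ln (real n)"
proof (induction n)
  case 0 then show ?case by simp
next
  case (Suc n)
  show ?case
  proof (cases "n = 0")
    case True then show ?thesis by simp
  next
    case False
    hence n: "real n > 0" by simp
    have "1 - 1 / (real (Suc n) / real n) \<le> ln (real (Suc n) / real n)"
      using n by (intro ln_ge_one_minus_inverse) auto
    moreover have "1 - 1 / (real (Suc n) / real n) = 1 / real (Suc n)"
      using n by (simp add: field_simps)
    ultimately have "1 / real (Suc n) \<le> ln (real (Suc n)) - ln (real n)"
      using n by (simp add: ln_div)
    hence step: "1 + real (Suc n) * ln (real n) \<le> real (Suc n) * ln (real (Suc n))"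
      by (simp add: field_simps del: of_nat_Suc)
    have "ln (fact (Suc n)) = ln (real (Suc n)) + ln (fact n)"
      by (simp add: ln_mult fact_Suc del: of_nat_Suc)
    thus ?thesis using Suc.IH step by (simp add: algebra_simps)
  qed
qed

lemma entropy_counts:
  fixes c :: "'b::finite \<Rightarrow> nat"
  assumes "(\<Sum>t\<in>UNIV. c t) = N"
  shows "real N * entropy (\<lambda>t. real (c t) / real N)
       = real N * ln (real N) - (\<Sum>t\<in>UNIV. real (c t) * ln (real (c t)))"
proof (cases "N = 0")
  case True
  hence "\<And>t. c t = 0" using assms by simp
  thus ?thesis using True by (simp add: entropy_def)
next
  case False
  have "real N * entropy (\<lambda>t. real (c t) / real N)
      = (\<Sum>t\<in>UNIV. - (real (c t) * (ln (real (c t)) - ln (real N))))"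
    unfolding entropy_def mult_minus_right sum_distrib_left sum_negf[symmetric]
    by (intro sum.cong refl arg_cong[where f=uminus]) (use False in \<open>auto simp: ln_div\<close>)
  also have "\<dots> = real N * ln (real N) - (\<Sum>t\<in>UNIV. real (c t) * ln (real (c t)))"
    by (simp add: algebra_simps sum_subtractf sum_distrib_right[symmetric] assms flip: of_nat_sum)
  finally show ?thesis .
qed

lemma size_multiset_finite_UNIV: "size (M::'b::finite multiset) = (\<Sum>x\<in>UNIV. count M x)"
proof -
  have "(\<Sum>x\<in>UNIV. count M x) = (\<Sum>x\<in>set_mset M. count M x)"
    by (intro sum.mono_neutral_right) (auto simp: not_in_iff)
  thus ?thesis by (simp add: size_multiset_overloaded_eq)
qed

lemma ln_card_permutations_of_multiset:
  fixes C :: "'b::finite multiset"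
  shows "ln (real (card (permutations_of_multiset C)))
       = ln (fact (size C)) - (\<Sum>t\<in>UNIV. ln (fact (count C t)))"
proof -
  have "(\<Prod>t\<in>set_mset C. fact (count C t)) = (\<Prod>t\<in>UNIV. fact (count C t) :: nat)"
    by (intro prod.mono_neutral_left) (auto simp: not_in_iff)
  hence "card (permutations_of_multiset C) * (\<Prod>t\<in>UNIV. fact (count C t)) = fact (size C)"
    using card_permutations_of_multiset_aux[of C] by simp
  hence eq: "real (card (permutations_of_multiset C)) * (\<Prod>t\<in>UNIV. fact (count C t)) = fact (size C)"
    by (metis (mono_tags, lifting) of_nat_fact of_nat_mult of_nat_prod prod.cong)
  have pos: "(\<Prod>t\<in>UNIV. fact (count C t) :: real) > 0" by (intro prod_pos) auto
  have "real (card (permutations_of_multiset C)) > 0" by (simp add: card_gt_0_iff)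
  hence "ln (fact (size C)) = ln (real (card (permutations_of_multiset C)))
           + ln (\<Prod>t\<in>UNIV. fact (count C t) :: real)"
    using eq[symmetric] pos by (simp add: ln_mult)
  also have "ln (\<Prod>t\<in>UNIV. fact (count C t) :: real) = (\<Sum>t\<in>UNIV. ln (fact (count C t)))"
    by (intro ln_prod) auto
  finally show ?thesis by simp
qed

lemma ln_multinomial_entropy:
  fixes C :: "'b::finite multiset"
  assumes N: "size C = N" "N > 0"
  shows "\<bar>ln (real (card (permutations_of_multiset C)))
            - real N * entropy (\<lambda>t. real (count C t) / real N)\<bar>
         \<le> (1 + real CARD('b)) * (1 + ln (real N))"
proof -
  have sumc: "(\<Sum>t\<in>UNIV. count C t) = N" using N by (simp add: size_multiset_finite_UNIV)
  have sr: "(\<Sum>t\<in>UNIV. real (count C t)) = real N" using sumc by (simp flip: of_nat_sum)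
  have L: "ln (real (card (permutations_of_multiset C)))
         = ln (fact N) - (\<Sum>t\<in>UNIV. ln (fact (count C t)))"
    using ln_card_permutations_of_multiset[of C] N by simp
  have E: "real N * entropy (\<lambda>t. real (count C t) / real N)
         = real N * ln (real N) - (\<Sum>t\<in>UNIV. real (count C t) * ln (real (count C t)))"
    by (rule entropy_counts[OF sumc])
  have count_le: "ln (real (count C t)) \<le> ln (real N)" for t
  proof -
    have "count C t \<le> N" unfolding sumc[symmetric] by (rule member_le_sum) auto
    thus ?thesis by (cases "count C t = 0") (use N in auto)
  qed
  have "(\<Sum>t\<in>UNIV. ln (fact (count C t)))
      \<le> (\<Sum>t\<in>UNIV. real (count C t) * ln (real (count C t)) - real (count C t) + 1 + ln (real N))"
    by (intro sum_mono) (use ln_fact_upper count_le in \<open>fastforce intro: add_mono order.trans\<close>)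
  also have "\<dots> = (\<Sum>t\<in>UNIV. real (count C t) * ln (real (count C t))) - real N
                 + real CARD('b) * (1 + ln (real N))"
    by (simp add: sum.distrib sum_subtractf sr algebra_simps)
  finally have up: "(\<Sum>t\<in>UNIV. ln (fact (count C t))) \<le> \<dots>" .
  have "(\<Sum>t\<in>UNIV. real (count C t) * ln (real (count C t)) - real (count C t))
      \<le> (\<Sum>t\<in>UNIV. ln (fact (count C t)))"
    by (intro sum_mono ln_fact_lower)
  hence lo: "(\<Sum>t\<in>UNIV. real (count C t) * ln (real (count C t))) - real N
           \<le> (\<Sum>t\<in>UNIV. ln (fact (count C t)))"
    by (simp add: sum_subtractf sr)
  have "0 \<le> ln (real N)" using N by simp
  hence "real CARD('b) * (1 + ln (real N)) \<le> (1 + real CARD('b)) * (1 + ln (real N))"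
    by (intro mult_right_mono) auto
  thus ?thesis using L E up lo ln_fact_lower[of N] ln_fact_upper[of N]
    unfolding abs_le_iff by (simp add: algebra_simps)
qed

section \<open>Sequences, types and permutation orbits\<close>

text \<open>A sequence of length \<open>N\<close> is a function on \<open>{..<N}\<close>, extensional outside.  We pass to
  lists to use the library's multiset permutations; the multiset of a sequence determines its
  type.\<close>

lemma card_eq_count_mset: "card {j\<in>{..<N}. u j = t} = count (mset (map u [0..<N])) t"
proof (induction N)
  case 0 then show ?case by simp
next
  case (Suc N)
  show ?case
  proof (cases "u N = t")
    case True
    hence "{j\<in>{..<Suc N}. u j = t} = insert N {j\<in>{..<N}. u j = t}" by (auto simp: less_Suc_eq)
    moreover have "card (insert N {j\<in>{..<N}. u j = t}) = Suc (card {j\<in>{..<N}. u j = t})"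
      by (rule card_insert_disjoint) auto
    ultimately show ?thesis using Suc True by simp
  next
    case False
    hence "{j\<in>{..<Suc N}. u j = t} = {j\<in>{..<N}. u j = t}" by (auto simp: less_Suc_eq)
    thus ?thesis using Suc False by simp
  qed
qed

lemma seq_type_mset: "seq_type N u t = real (count (mset (map u [0..<N])) t) / real N"
  unfolding seq_type_def card_eq_count_mset ..

definition seqs_of_type :: "nat \<Rightarrow> 'b multiset \<Rightarrow> (nat \<Rightarrow> 'b) set" where
  "seqs_of_type N M = {u \<in> {..<N} \<rightarrow>\<^sub>E UNIV. mset (map u [0..<N]) = M}"

definition seq_of_list :: "nat \<Rightarrow> 'b list \<Rightarrow> nat \<Rightarrow> 'b" where
  "seq_of_list N xs = (\<lambda>j. if j < N then xs ! j else undefined)"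

lemma seq_of_list_PiE: "seq_of_list N xs \<in> {..<N} \<rightarrow>\<^sub>E UNIV"
  by (rule PiE_I) (auto simp: seq_of_list_def)

lemma map_seq_of_list: "length xs = N \<Longrightarrow> map (seq_of_list N xs) [0..<N] = xs"
  by (auto simp: seq_of_list_def intro: nth_equalityI)

definition seq_of_mset :: "nat \<Rightarrow> 'b multiset \<Rightarrow> nat \<Rightarrow> 'b" where
  "seq_of_mset N M = seq_of_list N (SOME xs. mset xs = M)"

lemma seq_of_mset_PiE: "seq_of_mset N M \<in> {..<N} \<rightarrow>\<^sub>E UNIV"
  unfolding seq_of_mset_def by (rule seq_of_list_PiE)

lemma mset_seq_of_mset: "size M = N \<Longrightarrow> mset (map (seq_of_mset N M) [0..<N]) = M"
proof -
  assume "size M = N"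
  moreover have xs: "mset (SOME xs. mset xs = M) = M" by (rule someI_ex) (rule ex_mset)
  ultimately have "length (SOME xs. mset xs = M) = N" by (metis size_mset)
  thus ?thesis unfolding seq_of_mset_def using xs by (simp add: map_seq_of_list)
qed

lemma seq_eqI: "u \<in> {..<N} \<rightarrow>\<^sub>E UNIV \<Longrightarrow> v \<in> {..<N} \<rightarrow>\<^sub>E UNIV \<Longrightarrow> (\<And>j. j < N \<Longrightarrow> u j = v j) \<Longrightarrow> u = v"
  by (rule PiE_ext) auto

lemma inj_on_map_upt: "inj_on (\<lambda>u. map u [0..<N]) ({..<N} \<rightarrow>\<^sub>E UNIV)"
proof (rule inj_onI)
  fix u v assume u: "u \<in> {..<N} \<rightarrow>\<^sub>E UNIV" and v: "v \<in> {..<N} \<rightarrow>\<^sub>E UNIV"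
    and e: "map u [0..<N] = map v [0..<N]"
  show "u = v"
  proof (rule seq_eqI[OF u v])
    fix j assume "j < N"
    thus "u j = v j" using arg_cong[OF e, of "\<lambda>xs. xs ! j"] by simp
  qed
qed

text \<open>Sequences and lists of length \<open>N\<close> correspond bijectively, so a type class has as many
  elements as its multiset has arrangements.\<close>

lemma card_seqs_of_type: "size M = N \<Longrightarrow> card (seqs_of_type N M) = card (permutations_of_multiset M)"
proof -
  assume sM: "size M = N"
  have "(\<lambda>u. map u [0..<N]) ` seqs_of_type N M = permutations_of_multiset M"
  proof
    show "(\<lambda>u. map u [0..<N]) ` seqs_of_type N M \<subseteq> permutations_of_multiset M"
      unfolding seqs_of_type_def permutations_of_multiset_def by blast
    show "permutations_of_multiset M \<subseteq> (\<lambda>u. map u [0..<N]) ` seqs_of_type N M"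
    proof
      fix xs assume "xs \<in> permutations_of_multiset M"
      hence xs: "mset xs = M" by (simp add: permutations_of_multiset_def)
      hence l: "length xs = N" using sM size_mset[of xs] by simp
      have "mset (map (seq_of_list N xs) [0..<N]) = M"
        using xs by (simp only: map_seq_of_list[OF l])
      hence "seq_of_list N xs \<in> seqs_of_type N M" by (simp add: seqs_of_type_def seq_of_list_PiE)
      thus "xs \<in> (\<lambda>u. map u [0..<N]) ` seqs_of_type N M"
        by (rule rev_image_eqI) (rule map_seq_of_list[OF l, symmetric])
    qed
  qed
  moreover have "inj_on (\<lambda>u. map u [0..<N]) (seqs_of_type N M)"
    by (rule inj_on_subset[OF inj_on_map_upt]) (auto simp: seqs_of_type_def)
  ultimately show ?thesis using card_image[of "\<lambda>u. map u [0..<N]" "seqs_of_type N M"] by simp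
qed

lemma finite_perms: "finite (perms N)"
  unfolding perms_def by (rule finite_permutations) simp

lemma card_perms: "card (perms N) = fact N"
  unfolding perms_def by (rule card_permutations) auto

lemma perm_act_PiE: "perm_act N \<sigma> x \<in> {..<N} \<rightarrow>\<^sub>E UNIV"
  by (rule PiE_I) (auto simp: perm_act_def)

lemma perm_act_comp:
  assumes "\<sigma> permutes {..<N}" "\<tau> permutes {..<N}"
  shows "perm_act N (\<sigma> \<circ> \<tau>) x = perm_act N \<sigma> (perm_act N \<tau> x)"
proof
  fix j
  have "inv (\<sigma> \<circ> \<tau>) = inv \<tau> \<circ> inv \<sigma>"
    using permutes_bij[OF assms(1)] permutes_bij[OF assms(2)] by (rule o_inv_distrib)
  hence e: "inv (\<sigma> \<circ> \<tau>) j = inv \<tau> (inv \<sigma> j)" by simp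
  show "perm_act N (\<sigma> \<circ> \<tau>) x j = perm_act N \<sigma> (perm_act N \<tau> x) j"
  proof (cases "j < N")
    case True
    hence "inv \<sigma> j < N"
      using permutes_in_image[OF permutes_inv[OF assms(1)]] by simp
    thus ?thesis using True unfolding perm_act_def e by simp
  next
    case False thus ?thesis unfolding perm_act_def by simp
  qed
qed

lemma perm_act_id: "x \<in> {..<N} \<rightarrow>\<^sub>E UNIV \<Longrightarrow> perm_act N id x = x"
  by (rule seq_eqI[OF perm_act_PiE]) (auto simp: perm_act_def)

lemma perm_act_inv_cancel:
  assumes "\<sigma> permutes {..<N}" "x \<in> {..<N} \<rightarrow>\<^sub>E UNIV"
  shows "perm_act N (inv \<sigma>) (perm_act N \<sigma> x) = x"
proof -
  have "perm_act N (inv \<sigma>) (perm_act N \<sigma> x) = perm_act N (inv \<sigma> \<circ> \<sigma>) x"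
    by (rule perm_act_comp[symmetric, OF permutes_inv[OF assms(1)] assms(1)])
  also have "inv \<sigma> \<circ> \<sigma> = id" using assms(1) by (simp add: permutes_inv_o)
  finally show ?thesis using perm_act_id[OF assms(2)] by (simp add: id_def)
qed

lemma map_perm_act:
  assumes "\<sigma> permutes {..<N}"
  shows "map (perm_act N \<sigma> \<xi>) [0..<N] = permute_list (inv \<sigma>) (map \<xi> [0..<N])"
proof -
  have "\<And>j. j < N \<Longrightarrow> inv \<sigma> j < N"
    using permutes_in_image[OF permutes_inv[OF assms]] by simp
  thus ?thesis by (auto simp: permute_list_def perm_act_def intro!: nth_equalityI)
qed

definition orbit :: "nat \<Rightarrow> (nat \<Rightarrow> 'b) \<Rightarrow> (nat \<Rightarrow> 'b) set" where
  "orbit N \<xi> = (\<lambda>\<sigma>. perm_act N \<sigma> \<xi>) ` perms N"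

definition transporters :: "nat \<Rightarrow> (nat \<Rightarrow> 'b) \<Rightarrow> (nat \<Rightarrow> 'b) \<Rightarrow> (nat \<Rightarrow> nat) set" where
  "transporters N \<xi> v = {\<sigma> \<in> perms N. perm_act N \<sigma> \<xi> = v}"

lemma finite_orbit: "finite (orbit N \<xi>)"
  unfolding orbit_def using finite_perms by simp

lemma orbit_PiE: "v \<in> orbit N \<xi> \<Longrightarrow> v \<in> {..<N} \<rightarrow>\<^sub>E UNIV"
  unfolding orbit_def using perm_act_PiE by (elim imageE) simp

lemma self_in_orbit: "\<xi> \<in> {..<N} \<rightarrow>\<^sub>E UNIV \<Longrightarrow> \<xi> \<in> orbit N \<xi>"
  unfolding orbit_def perms_def
  by (rule image_eqI[of _ _ id]) (auto simp: perm_act_id permutes_id)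

lemma card_orbit_pos: "\<xi> \<in> {..<N} \<rightarrow>\<^sub>E UNIV \<Longrightarrow> card (orbit N \<xi>) > 0"
  using self_in_orbit finite_orbit by (metis card_gt_0_iff empty_iff)

lemma orbit_eq_seqs_of_type:
  assumes \<xi>: "\<xi> \<in> {..<N} \<rightarrow>\<^sub>E UNIV"
  shows "orbit N \<xi> = seqs_of_type N (mset (map \<xi> [0..<N]))"
proof
  show "orbit N \<xi> \<subseteq> seqs_of_type N (mset (map \<xi> [0..<N]))"
  proof
    fix v assume "v \<in> orbit N \<xi>"
    then obtain \<sigma> where \<sigma>: "\<sigma> permutes {..<N}" and v: "v = perm_act N \<sigma> \<xi>"
      by (auto simp: orbit_def perms_def)
    have "mset (map v [0..<N]) = mset (map \<xi> [0..<N])"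
      unfolding v map_perm_act[OF \<sigma>]
      by (rule mset_permute_list) (use permutes_inv[OF \<sigma>] in simp)
    thus "v \<in> seqs_of_type N (mset (map \<xi> [0..<N]))" by (simp add: seqs_of_type_def v perm_act_PiE)
  qed
  show "seqs_of_type N (mset (map \<xi> [0..<N])) \<subseteq> orbit N \<xi>"
  proof
    fix v assume "v \<in> seqs_of_type N (mset (map \<xi> [0..<N]))"
    hence vP: "v \<in> {..<N} \<rightarrow>\<^sub>E UNIV" and m: "mset (map v [0..<N]) = mset (map \<xi> [0..<N])"
      by (auto simp: seqs_of_type_def)
    obtain p where p: "p permutes {..<N}" and pl: "permute_list p (map \<xi> [0..<N]) = map v [0..<N]"
      using mset_eq_permutation[OF m] by auto
    have ip: "inv p permutes {..<N}" using p by (rule permutes_inv)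
    have "map (perm_act N (inv p) \<xi>) [0..<N] = map v [0..<N]"
      using map_perm_act[OF ip, of \<xi>] pl p by (simp add: permutes_inv_inv)
    hence "perm_act N (inv p) \<xi> = v"
      by (rule inj_onD[OF inj_on_map_upt _ perm_act_PiE vP])
    thus "v \<in> orbit N \<xi>" using ip by (auto simp: orbit_def perms_def)
  qed
qed

text \<open>Orbit-stabilizer: all fibres of \<open>\<sigma> \<mapsto> \<sigma>\<xi>\<close> over the orbit have the same size
  (left multiplication by a transporter is a bijection between them).\<close>

lemma card_transporters:
  assumes \<xi>: "\<xi> \<in> {..<N} \<rightarrow>\<^sub>E UNIV" and v: "v \<in> orbit N \<xi>"
  shows "card (transporters N \<xi> v) = card (transporters N \<xi> \<xi>)"
proof -
  obtain \<sigma>0 where s0: "\<sigma>0 permutes {..<N}" and v: "v = perm_act N \<sigma>0 \<xi>"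
    using v by (auto simp: orbit_def perms_def)
  have is0: "inv \<sigma>0 permutes {..<N}" using s0 by (rule permutes_inv)
  have "bij_betw (\<lambda>\<tau>. \<sigma>0 \<circ> \<tau>) (transporters N \<xi> \<xi>) (transporters N \<xi> v)"
  proof (rule bij_betw_byWitness[where f'="\<lambda>\<rho>. inv \<sigma>0 \<circ> \<rho>"])
    show "\<forall>a\<in>transporters N \<xi> \<xi>. inv \<sigma>0 \<circ> (\<sigma>0 \<circ> a) = a"
      using s0 by (simp add: o_assoc permutes_inv_o)
    show "\<forall>a\<in>transporters N \<xi> v. \<sigma>0 \<circ> (inv \<sigma>0 \<circ> a) = a"
      using s0 by (simp add: o_assoc permutes_inv_o)
    show "(\<circ>) \<sigma>0 ` transporters N \<xi> \<xi> \<subseteq> transporters N \<xi> v"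
    proof
      fix r assume "r \<in> (\<circ>) \<sigma>0 ` transporters N \<xi> \<xi>"
      then obtain \<tau> where r: "r = \<sigma>0 \<circ> \<tau>" and t: "\<tau> permutes {..<N}"
        and te: "perm_act N \<tau> \<xi> = \<xi>"
        unfolding transporters_def perms_def by blast
      have "r permutes {..<N}" unfolding r by (rule permutes_compose[OF t s0])
      moreover have "perm_act N r \<xi> = v" unfolding r v perm_act_comp[OF s0 t] te ..
      ultimately show "r \<in> transporters N \<xi> v" unfolding transporters_def perms_def by blast
    qed
    show "(\<circ>) (inv \<sigma>0) ` transporters N \<xi> v \<subseteq> transporters N \<xi> \<xi>"
    proof
      fix r assume "r \<in> (\<circ>) (inv \<sigma>0) ` transporters N \<xi> v"
      then obtain \<tau> where r: "r = inv \<sigma>0 \<circ> \<tau>" and t: "\<tau> permutes {..<N}"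
        and te: "perm_act N \<tau> \<xi> = v"
        unfolding transporters_def perms_def by blast
      have "r permutes {..<N}" unfolding r by (rule permutes_compose[OF t is0])
      moreover have "perm_act N r \<xi> = \<xi>" unfolding r perm_act_comp[OF is0 t] te v
        by (rule perm_act_inv_cancel[OF s0 \<xi>])
      ultimately show "r \<in> transporters N \<xi> \<xi>" unfolding transporters_def perms_def by blast
    qed
  qed
  thus ?thesis by (simp add: bij_betw_same_card)
qed

lemma sum_perms_orbit:
  fixes f :: "(nat \<Rightarrow> 'b) \<Rightarrow> 'c::comm_ring_1"
  assumes \<xi>: "\<xi> \<in> {..<N} \<rightarrow>\<^sub>E UNIV"
  shows "(\<Sum>\<sigma>\<in>perms N. f (perm_act N \<sigma> \<xi>))
       = of_nat (card (transporters N \<xi> \<xi>)) * (\<Sum>v\<in>orbit N \<xi>. f v)"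
proof -
  have "(\<Sum>\<sigma>\<in>perms N. f (perm_act N \<sigma> \<xi>))
      = (\<Sum>v\<in>orbit N \<xi>. \<Sum>\<sigma>\<in>transporters N \<xi> v. f (perm_act N \<sigma> \<xi>))"
    unfolding transporters_def
    by (rule sum.group[symmetric]) (auto simp: finite_perms finite_orbit orbit_def)
  also have "\<dots> = (\<Sum>v\<in>orbit N \<xi>. of_nat (card (transporters N \<xi> \<xi>)) * f v)"
  proof (intro sum.cong refl)
    fix v assume v: "v \<in> orbit N \<xi>"
    have "(\<Sum>\<sigma>\<in>transporters N \<xi> v. f (perm_act N \<sigma> \<xi>)) = (\<Sum>\<sigma>\<in>transporters N \<xi> v. f v)"
      by (rule sum.cong) (auto simp: transporters_def)
    thus "(\<Sum>\<sigma>\<in>transporters N \<xi> v. f (perm_act N \<sigma> \<xi>)) = of_nat (card (transporters N \<xi> \<xi>)) * f v"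
      using card_transporters[OF \<xi> v] by simp
  qed
  finally show ?thesis by (simp add: sum_distrib_left)
qed

lemma fact_eq_orbit_transporters:
  assumes \<xi>: "\<xi> \<in> {..<N} \<rightarrow>\<^sub>E UNIV"
  shows "fact N = card (orbit N \<xi>) * card (transporters N \<xi> \<xi>)"
proof -
  have "real (card (perms N)) = real (card (transporters N \<xi> \<xi>)) * real (card (orbit N \<xi>))"
    using sum_perms_orbit[OF \<xi>, of "\<lambda>_. 1 :: real"] by simp
  hence "card (perms N) = card (orbit N \<xi>) * card (transporters N \<xi> \<xi>)"
    by (simp flip: of_nat_mult)
  thus ?thesis using card_perms[of N] by simp
qed

section \<open>Tuples of sequences and averages over \<open>S_N^n\<close>\<close>

lemma PiE_UNIV_iff: "f \<in> Pi\<^sub>E (UNIV::'i set) B \<longleftrightarrow> (\<forall>i. f i \<in> B i)"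
  by (simp add: PiE_UNIV_domain Pi_iff)

lemma sum_perm_tuples_orbits:
  fixes \<xi> :: "'i::finite \<Rightarrow> nat \<Rightarrow> 'b" and F :: "('i \<Rightarrow> nat \<Rightarrow> 'b) \<Rightarrow> real"
  assumes \<xi>: "\<And>i. \<xi> i \<in> {..<N} \<rightarrow>\<^sub>E UNIV"
  shows "(\<Sum>\<sigma>s\<in>(UNIV::'i set) \<rightarrow>\<^sub>E perms N. F (\<lambda>i. perm_act N (\<sigma>s i) (\<xi> i)))
       = (\<Prod>i\<in>UNIV. real (card (transporters N (\<xi> i) (\<xi> i))))
         * (\<Sum>u\<in>Pi\<^sub>E (UNIV::'i set) (\<lambda>i. orbit N (\<xi> i)). F u)"
proof -
  define g where "g = (\<lambda>\<sigma>s::'i \<Rightarrow> nat \<Rightarrow> nat. \<lambda>i. perm_act N (\<sigma>s i) (\<xi> i))"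
  let ?S = "(UNIV::'i set) \<rightarrow>\<^sub>E perms N"
  let ?T = "Pi\<^sub>E (UNIV::'i set) (\<lambda>i. orbit N (\<xi> i))"
  have fS: "finite ?S" by (intro finite_PiE finite_perms) auto
  have fT: "finite ?T" by (intro finite_PiE finite_orbit) auto
  have gST: "g ` ?S \<subseteq> ?T"
  proof
    fix u assume "u \<in> g ` ?S"
    then obtain \<sigma>s where "\<sigma>s \<in> ?S" and u: "u = g \<sigma>s" by blast
    hence "\<forall>i. \<sigma>s i \<in> perms N" by (simp add: PiE_UNIV_iff)
    thus "u \<in> ?T" unfolding u g_def PiE_UNIV_iff orbit_def by blast
  qed
  have "(\<Sum>\<sigma>s\<in>?S. F (g \<sigma>s)) = (\<Sum>u\<in>?T. \<Sum>\<sigma>s\<in>{\<sigma>s\<in>?S. g \<sigma>s = u}. F (g \<sigma>s))"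
    by (rule sum.group[OF fS fT gST, symmetric])
  also have "\<dots> = (\<Sum>u\<in>?T. (\<Prod>i\<in>UNIV. real (card (transporters N (\<xi> i) (\<xi> i)))) * F u)"
  proof (rule sum.cong[OF refl])
    fix u assume u: "u \<in> ?T"
    have fibre: "{\<sigma>s\<in>?S. g \<sigma>s = u} = Pi\<^sub>E (UNIV::'i set) (\<lambda>i. transporters N (\<xi> i) (u i))"
      unfolding PiE_UNIV_iff set_eq_iff mem_Collect_eq transporters_def g_def fun_eq_iff[of _ u]
      by blast
    have "card {\<sigma>s\<in>?S. g \<sigma>s = u} = (\<Prod>i\<in>UNIV. card (transporters N (\<xi> i) (u i)))"
      unfolding fibre by (rule card_PiE) simp
    also have "\<dots> = (\<Prod>i\<in>UNIV. card (transporters N (\<xi> i) (\<xi> i)))"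
      using u by (intro prod.cong refl card_transporters[OF \<xi>]) (simp add: PiE_UNIV_iff)
    finally have c: "card {\<sigma>s\<in>?S. g \<sigma>s = u} = (\<Prod>i\<in>UNIV. card (transporters N (\<xi> i) (\<xi> i)))" .
    have "(\<Sum>\<sigma>s\<in>{\<sigma>s\<in>?S. g \<sigma>s = u}. F (g \<sigma>s)) = real (card {\<sigma>s\<in>?S. g \<sigma>s = u}) * F u"
      by simp
    thus "(\<Sum>\<sigma>s\<in>{\<sigma>s\<in>?S. g \<sigma>s = u}. F (g \<sigma>s))
        = (\<Prod>i\<in>UNIV. real (card (transporters N (\<xi> i) (\<xi> i)))) * F u"
      unfolding c by (simp add: of_nat_prod)
  qed
  finally show ?thesis unfolding g_def by (simp add: sum_distrib_left)
qed

lemma average_perm_tuples_orbits: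
  fixes \<xi> :: "'i::finite \<Rightarrow> nat \<Rightarrow> 'b" and F :: "('i \<Rightarrow> nat \<Rightarrow> 'b) \<Rightarrow> real"
  assumes \<xi>: "\<And>i. \<xi> i \<in> {..<N} \<rightarrow>\<^sub>E UNIV"
  shows "(1 / (fact N) ^ CARD('i)) * (\<Sum>\<sigma>s\<in>(UNIV::'i set) \<rightarrow>\<^sub>E perms N. F (\<lambda>i. perm_act N (\<sigma>s i) (\<xi> i)))
       = (1 / (\<Prod>i\<in>UNIV. real (card (orbit N (\<xi> i)))))
         * (\<Sum>u\<in>Pi\<^sub>E (UNIV::'i set) (\<lambda>i. orbit N (\<xi> i)). F u)"
proof -
  let ?O = "\<Prod>i\<in>UNIV. real (card (orbit N (\<xi> i)))"
  let ?T = "\<Prod>i\<in>UNIV. real (card (transporters N (\<xi> i) (\<xi> i)))"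
  have "(fact N :: real) ^ CARD('i) = (\<Prod>i\<in>(UNIV::'i set). fact N)" by simp
  also have "\<dots> = (\<Prod>i\<in>UNIV. real (card (orbit N (\<xi> i))) * real (card (transporters N (\<xi> i) (\<xi> i))))"
    by (intro prod.cong refl) (metis fact_eq_orbit_transporters[OF \<xi>] of_nat_fact of_nat_mult)
  finally have f: "(fact N :: real) ^ CARD('i) = ?O * ?T" by (simp add: prod.distrib)
  have "card (transporters N (\<xi> i) (\<xi> i)) \<noteq> 0" for i
    using fact_eq_orbit_transporters[OF \<xi>] by (metis fact_nonzero mult_0_right)
  hence "?T \<noteq> 0" by simp
  hence cancel: "1 / (?O * ?T) * (?T * S) = 1 / ?O * S" for S :: real by simp
  show ?thesis unfolding f sum_perm_tuples_orbits[OF \<xi>, of F] by (rule cancel)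
qed

lemma combine_PiE: "combine N u \<in> {..<N} \<rightarrow>\<^sub>E UNIV"
  by (rule PiE_I) (auto simp: combine_def)

lemma inj_on_combine: "inj_on (combine N) (Pi\<^sub>E (UNIV::'i set) (\<lambda>i. orbit N (\<xi> i)))"
proof (rule inj_onI)
  fix u v assume u: "u \<in> Pi\<^sub>E (UNIV::'i set) (\<lambda>i. orbit N (\<xi> i))"
    and v: "v \<in> Pi\<^sub>E (UNIV::'i set) (\<lambda>i. orbit N (\<xi> i))"
    and e: "combine N u = combine N v"
  show "u = v"
  proof
    fix i
    have ui: "u i \<in> {..<N} \<rightarrow>\<^sub>E UNIV" using u unfolding PiE_UNIV_iff by (intro orbit_PiE) blast
    have vi: "v i \<in> {..<N} \<rightarrow>\<^sub>E UNIV" using v unfolding PiE_UNIV_iff by (intro orbit_PiE) blast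
    show "u i = v i"
    proof (rule seq_eqI[OF ui vi])
      fix j assume j: "j < N"
      have "combine N u j i = combine N v j i" using e by simp
      thus "u i j = v i j" using j by (simp add: combine_def)
    qed
  qed
qed

text \<open>A nonnegative weight summed over orbit tuples is at most its sum over all sequences of
  \<open>n\<close>-tuples, since \<open>combine\<close> embeds the former into the latter.\<close>

lemma sum_orbit_tuples_le:
  fixes w :: "(nat \<Rightarrow> 'i::finite \<Rightarrow> 'b::finite) \<Rightarrow> real"
  assumes "\<And>y. w y \<ge> 0"
  shows "(\<Sum>u\<in>Pi\<^sub>E (UNIV::'i set) (\<lambda>i. orbit N (\<xi> i)). w (combine N u))
       \<le> (\<Sum>y\<in>{..<N} \<rightarrow>\<^sub>E UNIV. w y)"
proof -
  have "(\<Sum>u\<in>Pi\<^sub>E (UNIV::'i set) (\<lambda>i. orbit N (\<xi> i)). w (combine N u))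
      = (\<Sum>y\<in>combine N ` (Pi\<^sub>E (UNIV::'i set) (\<lambda>i. orbit N (\<xi> i))). w y)"
    using sum.reindex[OF inj_on_combine[of N \<xi>], of w] by (simp add: o_def)
  also have "\<dots> \<le> (\<Sum>y\<in>{..<N} \<rightarrow>\<^sub>E UNIV. w y)"
    by (rule sum_mono2) (use assms combine_PiE in \<open>auto intro: finite_PiE\<close>)
  finally show ?thesis .
qed

lemma sum_exp_sequences:
  fixes h :: "'b::finite \<Rightarrow> real"
  shows "(\<Sum>y\<in>{..<N} \<rightarrow>\<^sub>E UNIV. exp (\<Sum>j<N. h (y j))) = (\<Sum>x\<in>UNIV. exp (h x)) ^ N"
proof -
  have "(\<Sum>x\<in>UNIV. exp (h x)) ^ N = (\<Prod>j\<in>{..<N}. \<Sum>x\<in>UNIV. exp (h x))" by simp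
  also have "\<dots> = (\<Sum>y\<in>{..<N} \<rightarrow>\<^sub>E UNIV. \<Prod>j\<in>{..<N}. exp (h (y j)))"
    by (rule prod_sum_PiE) auto
  also have "\<dots> = (\<Sum>y\<in>{..<N} \<rightarrow>\<^sub>E UNIV. exp (\<Sum>j<N. h (y j)))"
    by (simp add: exp_sum)
  finally show ?thesis ..
qed

lemma sum_eq_seq_type:
  fixes h :: "'b::finite \<Rightarrow> real"
  assumes "N > 0"
  shows "(\<Sum>j<N. h (y j)) = real N * (\<Sum>x\<in>UNIV. seq_type N y x * h x)"
proof -
  have "(\<Sum>j<N. h (y j)) = (\<Sum>x\<in>UNIV. \<Sum>j\<in>{j\<in>{..<N}. y j = x}. h (y j))"
    by (rule sum.group[symmetric]) auto
  also have "\<dots> = (\<Sum>x\<in>UNIV. real (card {j\<in>{..<N}. y j = x}) * h x)"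
    by (intro sum.cong refl) simp
  also have "\<dots> = real N * (\<Sum>x\<in>UNIV. seq_type N y x * h x)"
    unfolding sum_distrib_left seq_type_def using assms by (intro sum.cong refl) simp
  finally show ?thesis .
qed

lemma seq_type_average_lower:
  fixes \<mu> :: "'b::finite \<Rightarrow> real"
  assumes y: "y \<in> Delta \<mu> N \<delta>"
  shows "(\<Sum>x\<in>UNIV. h x * \<mu> x) - \<delta> * (\<Sum>x\<in>UNIV. \<bar>h x\<bar>) \<le> (\<Sum>x\<in>UNIV. seq_type N y x * h x)"
proof -
  have "(\<Sum>x\<in>UNIV. h x * \<mu> x) - \<delta> * (\<Sum>x\<in>UNIV. \<bar>h x\<bar>) = (\<Sum>x\<in>UNIV. h x * \<mu> x - \<delta> * \<bar>h x\<bar>)"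
    by (simp add: sum_subtractf sum_distrib_left)
  also have "\<dots> \<le> (\<Sum>x\<in>UNIV. seq_type N y x * h x)"
  proof (rule sum_mono)
    fix x
    have "\<bar>seq_type N y x - \<mu> x\<bar> < \<delta>" using y by (simp add: Delta_def)
    hence "\<bar>(seq_type N y x - \<mu> x) * h x\<bar> \<le> \<delta> * \<bar>h x\<bar>"
      unfolding abs_mult by (intro mult_right_mono) auto
    thus "h x * \<mu> x - \<delta> * \<bar>h x\<bar> \<le> seq_type N y x * h x"
      by (simp add: abs_le_iff algebra_simps)
  qed
  finally show ?thesis .
qed

definition coords :: "nat \<Rightarrow> (nat \<Rightarrow> 'i \<Rightarrow> 'b) \<Rightarrow> 'i \<Rightarrow> nat \<Rightarrow> 'b" where
  "coords N y = (\<lambda>i j. if j < N then y j i else undefined)"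

lemma combine_coords: "y \<in> {..<N} \<rightarrow>\<^sub>E UNIV \<Longrightarrow> combine N (coords N y) = y"
  by (rule seq_eqI[OF combine_PiE]) (simp_all add: combine_def coords_def)

text \<open>If the coordinate sequences of \<open>y\<^sub>0\<close> have the types of \<open>\<xi>\<close>, then splitting into
  coordinates maps the type class of \<open>y\<^sub>0\<close> injectively into the tuples of orbits of \<open>\<xi>\<close>;
  this is how good orbit tuples are counted from below.\<close>

lemma card_seqs_of_type_le_orbit_tuples:
  fixes \<xi> :: "'i::finite \<Rightarrow> nat \<Rightarrow> 'b" and y0 :: "nat \<Rightarrow> 'i \<Rightarrow> 'b"
  assumes \<xi>: "\<And>i. \<xi> i \<in> {..<N} \<rightarrow>\<^sub>E UNIV"
    and m: "\<And>i. image_mset (\<lambda>x. x i) (mset (map y0 [0..<N])) = mset (map (\<xi> i) [0..<N])"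
    and P: "\<And>y. y \<in> seqs_of_type N (mset (map y0 [0..<N])) \<Longrightarrow> P y"
  shows "card (seqs_of_type N (mset (map y0 [0..<N])))
       \<le> card {u\<in>Pi\<^sub>E (UNIV::'i set) (\<lambda>i. orbit N (\<xi> i)). P (combine N u)}"
proof (rule card_inj_on_le[where f="coords N"])
  let ?S = "seqs_of_type N (mset (map y0 [0..<N]))"
  show "inj_on (coords N) ?S"
    by (rule inj_on_inverseI[where g="combine N"]) (simp add: combine_coords seqs_of_type_def)
  show "coords N ` ?S \<subseteq> {u\<in>Pi\<^sub>E (UNIV::'i set) (\<lambda>i. orbit N (\<xi> i)). P (combine N u)}"
  proof
    fix u assume "u \<in> coords N ` ?S"
    then obtain y where y: "y \<in> ?S" and u: "u = coords N y" by blast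
    have yP: "y \<in> {..<N} \<rightarrow>\<^sub>E UNIV" and ym: "mset (map y [0..<N]) = mset (map y0 [0..<N])"
      using y by (auto simp: seqs_of_type_def)
    have "u i \<in> orbit N (\<xi> i)" for i
    proof -
      have ui: "u i \<in> {..<N} \<rightarrow>\<^sub>E UNIV" unfolding u coords_def by (rule PiE_I) auto
      have "map (u i) [0..<N] = map (\<lambda>x. x i) (map y [0..<N])" by (simp add: u coords_def)
      hence "mset (map (u i) [0..<N]) = image_mset (\<lambda>x. x i) (mset (map y [0..<N]))"
        by (simp only: mset_map)
      also have "\<dots> = mset (map (\<xi> i) [0..<N])" unfolding ym by (rule m)
      finally show ?thesis unfolding orbit_eq_seqs_of_type[OF \<xi>] seqs_of_type_def using ui by blast
    qed
    thus "u \<in> {u\<in>Pi\<^sub>E (UNIV::'i set) (\<lambda>i. orbit N (\<xi> i)). P (combine N u)}"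
      unfolding PiE_UNIV_iff mem_Collect_eq u combine_coords[OF yP] using P[OF y] by blast
  qed
  show "finite {u\<in>Pi\<^sub>E (UNIV::'i set) (\<lambda>i. orbit N (\<xi> i)). P (combine N u)}"
    by (rule finite_subset[OF _ finite_PiE[of UNIV "\<lambda>i. orbit N (\<xi> i)"]]) (auto intro: finite_orbit)
qed

section \<open>Growth rate of orbits\<close>

lemma continuous_xlnx: "(a::real) \<ge> 0 \<Longrightarrow> continuous (at a within {0..}) (\<lambda>x. x * ln x)"
proof -
  assume a: "a \<ge> 0"
  show ?thesis
  proof (cases "a = 0")
    case True
    have "((\<lambda>x::real. x * ln x) \<longlongrightarrow> 0) (at_right 0)" by real_asymp
    hence "((\<lambda>x::real. x * ln x) \<longlongrightarrow> 0 * ln 0) (at 0 within {0..})"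
      by (simp add: at_within_Ici_at_right)
    thus ?thesis unfolding True continuous_within by simp
  next
    case False
    hence "isCont (\<lambda>x. x * ln x) a" using a by (intro continuous_intros) auto
    thus ?thesis by (rule continuous_at_imp_continuous_at_within)
  qed
qed

lemma entropy_tendsto:
  fixes p :: "nat \<Rightarrow> 'b::finite \<Rightarrow> real"
  assumes lim: "\<And>x. (\<lambda>N. p N x) \<longlonglongrightarrow> q x" and nn: "\<And>N x. p N x \<ge> 0"
  shows "(\<lambda>N. entropy (p N)) \<longlonglongrightarrow> entropy q"
proof -
  have "(\<lambda>N. p N x * ln (p N x)) \<longlonglongrightarrow> q x * ln (q x)" for x
  proof -
    have "q x \<ge> 0" by (rule tendsto_lowerbound[OF lim]) (use nn in auto)
    thus ?thesis
      by (rule continuous_within_tendsto_compose'[OF continuous_xlnx _ lim]) (use nn in auto)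
  qed
  thus ?thesis unfolding entropy_def by (intro tendsto_minus tendsto_sum) auto
qed

lemma ln_card_orbit_tendsto:
  fixes \<xi> :: "nat \<Rightarrow> nat \<Rightarrow> 'b::finite"
  assumes \<xi>: "\<And>N. \<xi> N \<in> {..<N} \<rightarrow>\<^sub>E UNIV"
    and lim: "\<And>t. (\<lambda>N. seq_type N (\<xi> N) t) \<longlonglongrightarrow> m t"
  shows "(\<lambda>N. ln (real (card (orbit N (\<xi> N)))) / real N) \<longlonglongrightarrow> entropy m"
proof -
  define C where "C N = mset (map (\<xi> N) [0..<N])" for N
  define H where "H N = entropy (\<lambda>t. real (count (C N) t) / real N)" for N
  have st: "real (count (C N) t) / real N = seq_type N (\<xi> N) t" for N t
    unfolding C_def by (rule seq_type_mset[symmetric])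
  have H: "H \<longlonglongrightarrow> entropy m"
    unfolding H_def st by (rule entropy_tendsto[OF lim]) (simp add: seq_type_def)
  have err: "norm (ln (real (card (orbit N (\<xi> N)))) / real N - H N)
           \<le> (1 + real CARD('b)) * ((1 + ln (real N)) / real N)" if N: "N > 0" for N
  proof -
    have "card (orbit N (\<xi> N)) = card (permutations_of_multiset (C N))"
      unfolding orbit_eq_seqs_of_type[OF \<xi>] C_def by (rule card_seqs_of_type) simp
    hence "\<bar>ln (real (card (orbit N (\<xi> N)))) - real N * H N\<bar>
         \<le> (1 + real CARD('b)) * (1 + ln (real N))"
      using ln_multinomial_entropy[of "C N" N] N by (simp add: C_def H_def)
    hence "\<bar>ln (real (card (orbit N (\<xi> N)))) - real N * H N\<bar> / real N
         \<le> (1 + real CARD('b)) * (1 + ln (real N)) / real N"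
      by (rule divide_right_mono) simp
    moreover have "\<bar>ln (real (card (orbit N (\<xi> N)))) - real N * H N\<bar> / real N
                 = \<bar>ln (real (card (orbit N (\<xi> N)))) / real N - H N\<bar>"
      using N by (simp add: field_simps)
    ultimately show ?thesis by simp
  qed
  have "(\<lambda>N. (1 + real CARD('b)) * ((1 + ln (real N)) / real N)) \<longlonglongrightarrow> 0"
    by real_asymp
  hence "(\<lambda>N. ln (real (card (orbit N (\<xi> N)))) / real N - H N) \<longlonglongrightarrow> 0"
    by (rule Lim_null_comparison[rotated]) (use err in \<open>intro eventually_sequentiallyI[of 1], simp\<close>)
  from tendsto_add[OF this H] show ?thesis by simp
qed

section \<open>Joint sequences with prescribed marginal types\<close>

text \<open>Given the coordinate types \<open>C\<^sub>i\<close> (of size \<open>N\<close>) of sequences that approximate the marginals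
  of \<open>\<mu>\<close>, we construct a multiset of \<open>n\<close>-tuples with exactly these marginals whose type is close
  to \<open>\<mu>\<close>: first take \<open>\<lfloor>N (\<mu>(x) - \<epsilon>)\<^sup>+\<rfloor>\<close> copies of each \<open>x\<close>, then complete the marginals
  arbitrarily; few tuples are needed for the completion.\<close>

lemma sum_pos_part_le:
  fixes \<mu> :: "'b \<Rightarrow> real"
  assumes T: "finite T" and e: "\<epsilon> \<ge> 0" and nn: "\<And>x. \<mu> x \<ge> 0"
  shows "(\<Sum>x\<in>T. max 0 (\<mu> x - \<epsilon>)) \<le> max 0 ((\<Sum>x\<in>T. \<mu> x) - \<epsilon>)"
proof -
  define T' where "T' = {x\<in>T. \<mu> x > \<epsilon>}"
  have T'T: "T' \<subseteq> T" by (auto simp: T'_def)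
  have fT': "finite T'" using T T'T by (rule finite_subset[rotated])
  have "(\<Sum>x\<in>T. max 0 (\<mu> x - \<epsilon>)) = (\<Sum>x\<in>T'. \<mu> x - \<epsilon>)"
    by (subst sum.mono_neutral_right[OF T T'T]) (auto simp: T'_def intro: sum.cong)
  also have "\<dots> \<le> max 0 ((\<Sum>x\<in>T. \<mu> x) - \<epsilon>)"
  proof (cases "T' = {}")
    case True thus ?thesis by simp
  next
    case False
    hence "1 \<le> card T'" using fT' by (simp add: Suc_le_eq card_gt_0_iff)
    hence "\<epsilon> \<le> real (card T') * \<epsilon>" using e by (simp add: mult_le_cancel_right1)
    moreover have "(\<Sum>x\<in>T'. \<mu> x) \<le> (\<Sum>x\<in>T. \<mu> x)" by (rule sum_mono2[OF T T'T]) (use nn in auto)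
    ultimately show ?thesis by (simp add: sum_subtractf)
  qed
  finally show ?thesis .
qed

lemma count_image_mset_finite_UNIV:
  fixes M :: "'b::finite multiset"
  shows "count (image_mset g M) t = (\<Sum>x\<in>{x. g x = t}. count M x)"
proof -
  have "count (image_mset g M) t = (\<Sum>x | x \<in># M \<and> t = g x. count M x)" by (rule count_image_mset')
  also have "\<dots> = (\<Sum>x\<in>{x. g x = t}. count M x)"
    by (intro sum.mono_neutral_left) (auto simp: not_in_iff)
  finally show ?thesis .
qed

definition floor_counts :: "nat \<Rightarrow> real \<Rightarrow> ('b::finite \<Rightarrow> real) \<Rightarrow> 'b multiset" where
  "floor_counts N \<epsilon> \<mu> = (\<Sum>x\<in>UNIV. replicate_mset (nat \<lfloor>real N * max 0 (\<mu> x - \<epsilon>)\<rfloor>) x)"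

lemma count_floor_counts: "count (floor_counts N \<epsilon> \<mu>) x = nat \<lfloor>real N * max 0 (\<mu> x - \<epsilon>)\<rfloor>"
proof -
  have "count (floor_counts N \<epsilon> \<mu>) x
      = (\<Sum>y\<in>UNIV. if y = x then nat \<lfloor>real N * max 0 (\<mu> y - \<epsilon>)\<rfloor> else 0)"
    unfolding floor_counts_def count_sum by (intro sum.cong refl) auto
  thus ?thesis by simp
qed

lemma floor_counts_bounds:
  fixes \<mu> :: "'b::finite \<Rightarrow> real"
  assumes nn: "\<mu> x \<ge> 0" and e: "\<epsilon> \<ge> 0"
  shows "real (count (floor_counts N \<epsilon> \<mu>) x) \<le> real N * \<mu> x"
    and "real N * (\<mu> x - \<epsilon>) - 1 \<le> real (count (floor_counts N \<epsilon> \<mu>) x)"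
proof -
  have floor_le: "real (count (floor_counts N \<epsilon> \<mu>) x) \<le> real N * max 0 (\<mu> x - \<epsilon>)"
    and floor_ge: "real N * max 0 (\<mu> x - \<epsilon>) - 1 \<le> real (count (floor_counts N \<epsilon> \<mu>) x)"
    unfolding count_floor_counts by (simp_all add: of_nat_nat)
  have "real N * max 0 (\<mu> x - \<epsilon>) \<le> real N * \<mu> x" using nn e by (intro mult_left_mono) auto
  thus "real (count (floor_counts N \<epsilon> \<mu>) x) \<le> real N * \<mu> x" using floor_le by linarith
  have "real N * (\<mu> x - \<epsilon>) \<le> real N * max 0 (\<mu> x - \<epsilon>)" by (intro mult_left_mono) auto
  thus "real N * (\<mu> x - \<epsilon>) - 1 \<le> real (count (floor_counts N \<epsilon> \<mu>) x)" using floor_ge by linarith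
qed

text \<open>Rounding down loses at most \<open>N\<epsilon> + 1\<close> copies per point.\<close>

lemma size_floor_counts_ge:
  fixes \<mu> :: "'b::finite \<Rightarrow> real"
  assumes nn: "\<And>x. \<mu> x \<ge> 0" and s1: "(\<Sum>x\<in>UNIV. \<mu> x) = 1" and e: "\<epsilon> \<ge> 0"
  shows "real N - real CARD('b) * (real N * \<epsilon> + 1) \<le> real (size (floor_counts N \<epsilon> \<mu>))"
proof -
  have "real N - real CARD('b) * (real N * \<epsilon> + 1) = (\<Sum>x\<in>UNIV. real N * (\<mu> x - \<epsilon>) - 1)"
    by (simp add: sum_subtractf sum_distrib_left[symmetric] s1 algebra_simps)
  also have "\<dots> \<le> (\<Sum>x\<in>UNIV. real (count (floor_counts N \<epsilon> \<mu>) x))"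
    by (intro sum_mono floor_counts_bounds(2) nn e)
  also have "\<dots> = real (size (floor_counts N \<epsilon> \<mu>))"
    unfolding size_multiset_finite_UNIV of_nat_sum ..
  finally show ?thesis .
qed

lemma floor_counts_marginal_le:
  fixes \<mu> :: "('i::finite \<Rightarrow> 'a::finite) \<Rightarrow> real"
  assumes nn: "\<And>x. \<mu> x \<ge> 0" and e: "\<epsilon> \<ge> 0"
    and cl: "\<And>t. real N * (marginal \<mu> i t - \<epsilon>) \<le> real (count (C i) t)"
  shows "image_mset (\<lambda>x. x i) (floor_counts N \<epsilon> \<mu>) \<subseteq># C i"
  unfolding subseteq_mset_def
proof
  fix t
  have "real (count (image_mset (\<lambda>x. x i) (floor_counts N \<epsilon> \<mu>)) t)
      = (\<Sum>x\<in>{x. x i = t}. real (nat \<lfloor>real N * max 0 (\<mu> x - \<epsilon>)\<rfloor>))"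
    unfolding count_image_mset_finite_UNIV count_floor_counts by simp
  also have "\<dots> \<le> (\<Sum>x\<in>{x. x i = t}. real N * max 0 (\<mu> x - \<epsilon>))"
    by (intro sum_mono) (simp add: of_nat_nat)
  also have "\<dots> = real N * (\<Sum>x\<in>{x. x i = t}. max 0 (\<mu> x - \<epsilon>))" by (simp add: sum_distrib_left)
  also have "\<dots> \<le> real N * max 0 (marginal \<mu> i t - \<epsilon>)"
    unfolding marginal_def by (intro mult_left_mono sum_pos_part_le e nn) auto
  also have "\<dots> \<le> real (count (C i) t)"
    using cl[of t] by (cases "marginal \<mu> i t - \<epsilon> \<le> 0") (auto simp: max_def)
  finally show "count (image_mset (\<lambda>x. x i) (floor_counts N \<epsilon> \<mu>)) t \<le> count (C i) t"
    by (simp only: of_nat_le_iff)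
qed

lemma complete_marginals:
  fixes W :: "('i \<Rightarrow> 'a) multiset"
  assumes sub: "\<And>i. image_mset (\<lambda>x. x i) W \<subseteq># C i" and sz: "\<And>i. size (C i) = N"
  shows "\<exists>Z. size Z = N - size W \<and> (\<forall>i. image_mset (\<lambda>x. x i) (W + Z) = C i)"
proof -
  define D where "D i = C i - image_mset (\<lambda>x. x i) W" for i
  have sD: "size (D i) = N - size W" for i
    unfolding D_def by (subst size_Diff_submset[OF sub]) (simp add: sz)
  define s where "s i = (SOME xs. mset xs = D i)" for i
  have ms: "mset (s i) = D i" for i unfolding s_def by (rule someI_ex) (rule ex_mset)
  have ls: "length (s i) = N - size W" for i using sD[of i] ms[of i] by (metis size_mset)
  define Z where "Z = mset (map (\<lambda>j i. s i ! j) [0..<N - size W])"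
  have "image_mset (\<lambda>x. x i) Z = D i" for i
  proof -
    have "map (\<lambda>x. x i) (map (\<lambda>j i. s i ! j) [0..<N - size W]) = s i"
      by (rule nth_equalityI) (simp_all add: ls)
    thus ?thesis unfolding Z_def by (metis ms mset_map)
  qed
  hence "image_mset (\<lambda>x. x i) (W + Z) = C i" for i
    unfolding D_def by (simp add: subset_mset.add_diff_inverse[OF sub])
  moreover have "size Z = N - size W" by (simp add: Z_def)
  ultimately show ?thesis by blast
qed

lemma relative_error_bound:
  fixes c m d \<epsilon> :: real
  assumes N: "N > 0" and d: "d \<ge> 0" and e: "\<epsilon> \<ge> 0"
    and lo: "real N * m - (real N * \<epsilon> + 1) \<le> c" and up: "c \<le> real N * m + d * (real N * \<epsilon> + 1)"
  shows "\<bar>c / real N - m\<bar> \<le> (1 + d) * (\<epsilon> + 1 / real N)"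
proof -
  define K where "K = real N * \<epsilon> + 1"
  have "0 \<le> K" "0 \<le> d * K" unfolding K_def using d e by simp_all
  hence "\<bar>c - real N * m\<bar> \<le> (1 + d) * K"
    using lo up unfolding K_def by (simp add: abs_le_iff algebra_simps)
  hence "\<bar>c - real N * m\<bar> / real N \<le> (1 + d) * K / real N" by (rule divide_right_mono) simp
  moreover have "\<bar>c - real N * m\<bar> / real N = \<bar>c / real N - m\<bar>" using N by (simp add: field_simps)
  moreover have "(1 + d) * K / real N = (1 + d) * (\<epsilon> + 1 / real N)"
    unfolding K_def using N by (simp add: field_simps)
  ultimately show ?thesis by simp
qed

lemma joint_multiset_exists:
  fixes \<mu> :: "('i::finite \<Rightarrow> 'a::finite) \<Rightarrow> real" and C :: "'i \<Rightarrow> 'a multiset"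
  assumes nn: "\<And>x. \<mu> x \<ge> 0" and s1: "(\<Sum>x\<in>UNIV. \<mu> x) = 1" and N: "N > 0" and e: "\<epsilon> \<ge> 0"
    and sz: "\<And>i. size (C i) = N"
    and cl: "\<And>i t. real N * (marginal \<mu> i t - \<epsilon>) \<le> real (count (C i) t)"
  shows "\<exists>M. size M = N \<and> (\<forall>i. image_mset (\<lambda>x. x i) M = C i) \<and>
           (\<forall>x. \<bar>real (count M x) / real N - \<mu> x\<bar> \<le> (1 + real CARD('i \<Rightarrow> 'a)) * (\<epsilon> + 1 / real N))"
proof -
  define d where "d = real CARD('i \<Rightarrow> 'a)"
  define W where "W = floor_counts N \<epsilon> \<mu>"
  have sub: "image_mset (\<lambda>x. x i) W \<subseteq># C i" for i
    unfolding W_def using nn e cl by (rule floor_counts_marginal_le)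
  obtain Z where sZ: "size Z = N - size W" and marg: "\<And>i. image_mset (\<lambda>x. x i) (W + Z) = C i"
    using complete_marginals[OF sub sz] by blast
  have WN: "size W \<le> N"
    using size_mset_mono[OF sub[of undefined]] sz[of undefined] by simp
  have few: "real (size Z) \<le> d * (real N * \<epsilon> + 1)"
    using size_floor_counts_ge[OF nn s1 e, of N] sZ WN unfolding W_def d_def by simp
  have "\<bar>real (count (W + Z) x) / real N - \<mu> x\<bar> \<le> (1 + d) * (\<epsilon> + 1 / real N)" for x
  proof (rule relative_error_bound[OF N _ e])
    have "count Z x \<le> size Z" by (rule count_le_size)
    thus "real (count (W + Z) x) \<le> real N * \<mu> x + d * (real N * \<epsilon> + 1)"
      using floor_counts_bounds(1)[where \<mu>=\<mu> and x=x and \<epsilon>=\<epsilon> and N=N, OF nn e] few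
      unfolding W_def by simp
    show "real N * \<mu> x - (real N * \<epsilon> + 1) \<le> real (count (W + Z) x)"
      using floor_counts_bounds(2)[where \<mu>=\<mu> and x=x and \<epsilon>=\<epsilon> and N=N, OF nn e]
      unfolding W_def by (simp add: algebra_simps)
  qed (simp add: d_def)
  moreover have "size (W + Z) = N" using sZ WN by simp
  ultimately show ?thesis using marg unfolding d_def by blast
qed

definition partition_sum :: "('b::finite \<Rightarrow> real) \<Rightarrow> real" where
  "partition_sum h = (\<Sum>x\<in>UNIV. exp (h x))"

definition l1_norm :: "('b::finite \<Rightarrow> real) \<Rightarrow> real" where
  "l1_norm h = (\<Sum>x\<in>UNIV. \<bar>h x\<bar>)"

definition mean :: "('b::finite \<Rightarrow> real) \<Rightarrow> ('b \<Rightarrow> real) \<Rightarrow> real" where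
  "mean \<mu> h = (\<Sum>x\<in>UNIV. h x * \<mu> x)"

lemma partition_sum_pos: "partition_sum h > 0"
  unfolding partition_sum_def by (intro sum_pos) auto

lemma l1_norm_nonneg: "l1_norm h \<ge> 0"
  unfolding l1_norm_def by (intro sum_nonneg) auto

text \<open>Choosing \<open>h = ln \<mu>\<close> (and a very negative value where \<open>\<mu>\<close> vanishes) gives
  \<open>\<mu>(h) = -S(\<mu>)\<close> with \<open>Z(h)\<close> arbitrarily close to \<open>1\<close>: this is the test function that makes
  the upper bounds sharp.\<close>

lemma log_density_test_function:
  fixes \<mu> :: "'b::finite \<Rightarrow> real"
  assumes nn: "\<And>x. \<mu> x \<ge> 0" and s1: "(\<Sum>x\<in>UNIV. \<mu> x) = 1" and e: "\<epsilon> > 0"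
  shows "\<exists>h. mean \<mu> h = - entropy \<mu> \<and> ln (partition_sum h) \<le> \<epsilon>"
proof -
  define d where "d = real CARD('b)"
  have d: "d > 0" by (simp add: d_def)
  define h where "h x = (if \<mu> x > 0 then ln (\<mu> x) else - ln (d / \<epsilon>))" for x
  have "mean \<mu> h = (\<Sum>x\<in>UNIV. \<mu> x * ln (\<mu> x))"
    unfolding mean_def by (intro sum.cong refl) (use nn in \<open>auto simp: h_def order.order_iff_strict\<close>)
  hence mu: "mean \<mu> h = - entropy \<mu>" by (simp add: entropy_def)
  have "partition_sum h \<le> (\<Sum>x\<in>UNIV. \<mu> x + \<epsilon> / d)"
    unfolding partition_sum_def
    by (intro sum_mono) (use nn d e in \<open>auto simp: h_def exp_minus\<close>)
  also have "\<dots> = 1 + \<epsilon>" using d by (simp add: sum.distrib s1 d_def)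
  finally have "partition_sum h \<le> 1 + \<epsilon>" .
  moreover have "ln (partition_sum h) \<le> partition_sum h - 1"
    using partition_sum_pos by (rule ln_le_minus_one)
  ultimately show ?thesis using mu by fastforce
qed

lemma Limsup_le_tendsto:
  assumes "g \<longlonglongrightarrow> L" "\<forall>\<^sub>F N in sequentially. f N \<le> ereal (g N)"
  shows "limsup f \<le> ereal L"
proof -
  have "limsup f \<le> limsup (\<lambda>N. ereal (g N))" by (rule Limsup_mono[OF assms(2)])
  also have "\<dots> = ereal L" by (rule lim_imp_Limsup) (auto intro: tendsto_ereal assms(1))
  finally show ?thesis .
qed

lemma tendsto_le_Limsup:
  assumes "g \<longlonglongrightarrow> L" "\<forall>\<^sub>F N in sequentially. ereal (g N) \<le> f N"
  shows "ereal L \<le> limsup f"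
proof -
  have "ereal L = limsup (\<lambda>N. ereal (g N))"
    by (rule lim_imp_Limsup[symmetric]) (auto intro: tendsto_ereal assms(1))
  also have "\<dots> \<le> limsup f" by (rule Limsup_mono[OF assms(2)])
  finally show ?thesis .
qed

lemma tendsto_at_right_0_ereal:
  fixes F :: "real \<Rightarrow> ereal"
  assumes lower: "\<And>\<delta>. \<delta> > 0 \<Longrightarrow> ereal c \<le> F \<delta>"
    and upper: "\<And>\<epsilon>. \<epsilon> > 0 \<Longrightarrow> \<exists>\<delta>0>0. \<forall>\<delta>. 0 < \<delta> \<and> \<delta> < \<delta>0 \<longrightarrow> F \<delta> \<le> ereal (c + \<epsilon>)"
  shows "(F \<longlongrightarrow> ereal c) (at_right 0)"
proof (rule order_tendstoI)
  fix a assume "a < ereal c"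
  thus "\<forall>\<^sub>F \<delta> in at_right 0. a < F \<delta>"
    unfolding eventually_at_right_field using lower
    by (intro exI[of _ 1]) (auto intro: less_le_trans)
next
  fix a assume a: "ereal c < a"
  obtain \<epsilon> where e: "\<epsilon> > 0" and ea: "ereal (c + \<epsilon>) < a"
  proof (cases a)
    case (real r)
    hence "(r - c) / 2 > 0" "ereal (c + (r - c) / 2) < a" using a by (simp_all add: field_simps)
    thus ?thesis by (rule that)
  next
    case PInf thus ?thesis using that[of 1] by simp
  next
    case MInf thus ?thesis using a by simp
  qed
  then obtain \<delta>0 where "\<delta>0 > 0" "\<forall>\<delta>. 0 < \<delta> \<and> \<delta> < \<delta>0 \<longrightarrow> F \<delta> \<le> ereal (c + \<epsilon>)"
    using upper by blast
  thus "\<forall>\<^sub>F \<delta> in at_right 0. F \<delta> < a"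
    unfolding eventually_at_right_field using ea by (blast intro: le_less_trans)
qed

locale marginal_approximation =
  fixes \<mu> :: "('i::finite \<Rightarrow> 'a::{finite,linorder}) \<Rightarrow> real"
    and \<Xi> :: "nat \<Rightarrow> 'i \<Rightarrow> nat \<Rightarrow> 'a"
  assumes prob: "is_prob \<mu>"
    and approx: "approx_seq (marginal \<mu>) \<Xi>"
begin

lemma nonneg: "\<mu> x \<ge> 0"
  using prob by (simp add: is_prob_def)

lemma sum_one: "(\<Sum>x\<in>UNIV. \<mu> x) = 1"
  using prob by (simp add: is_prob_def)

lemma Xi_PiE: "\<Xi> N i \<in> {..<N} \<rightarrow>\<^sub>E UNIV"
  using approx by (simp add: approx_seq_def sorted_seq_def)

lemma Xi_type_tendsto: "(\<lambda>N. seq_type N (\<Xi> N i) t) \<longlonglongrightarrow> marginal \<mu> i t"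
  using approx by (simp add: approx_seq_def)

definition orbit_tuples :: "nat \<Rightarrow> ('i \<Rightarrow> nat \<Rightarrow> 'a) set" where
  "orbit_tuples N = Pi\<^sub>E UNIV (\<lambda>i. orbit N (\<Xi> N i))"

definition orbit_volume :: "nat \<Rightarrow> real" where
  "orbit_volume N = (\<Prod>i\<in>UNIV. real (card (orbit N (\<Xi> N i))))"

definition good_tuples :: "nat \<Rightarrow> real \<Rightarrow> ('i \<Rightarrow> nat \<Rightarrow> 'a) set" where
  "good_tuples N \<delta> = {u \<in> orbit_tuples N. combine N u \<in> Delta \<mu> N \<delta>}"

definition marginal_entropy :: real where
  "marginal_entropy = (\<Sum>i\<in>UNIV. entropy (marginal \<mu> i))"

lemma finite_orbit_tuples: "finite (orbit_tuples N)"
  unfolding orbit_tuples_def by (intro finite_PiE finite_orbit) auto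

lemma Xi_in_orbit_tuples: "\<Xi> N \<in> orbit_tuples N"
  unfolding orbit_tuples_def PiE_UNIV_iff using self_in_orbit[OF Xi_PiE] by blast

lemma orbit_volume_pos: "orbit_volume N > 0"
  unfolding orbit_volume_def by (intro prod_pos) (use card_orbit_pos[OF Xi_PiE] in simp)

lemma ln_orbit_volume_tendsto: "(\<lambda>N. ln (orbit_volume N) / real N) \<longlonglongrightarrow> marginal_entropy"
proof -
  have "ln (orbit_volume N) / real N = (\<Sum>i\<in>UNIV. ln (real (card (orbit N (\<Xi> N i)))) / real N)" for N
    unfolding orbit_volume_def
    by (subst ln_prod) (use card_orbit_pos[OF Xi_PiE] in \<open>auto simp: sum_divide_distrib\<close>)
  moreover have "(\<lambda>N. \<Sum>i\<in>UNIV. ln (real (card (orbit N (\<Xi> N i)))) / real N) \<longlonglongrightarrow> marginal_entropy"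
    unfolding marginal_entropy_def
    by (intro tendsto_sum ln_card_orbit_tendsto Xi_PiE Xi_type_tendsto)
  ultimately show ?thesis by simp
qed

lemma gamma_sym_eq: "gamma_sym \<mu> \<Xi> N \<delta> = real (card (good_tuples N \<delta>)) / orbit_volume N"
proof -
  let ?ind = "\<lambda>u. if combine N u \<in> Delta \<mu> N \<delta> then 1 else (0::real)"
  have fS: "finite ((UNIV::'i set) \<rightarrow>\<^sub>E perms N)" by (intro finite_PiE finite_perms) auto
  have "real (card (Delta_sym \<mu> \<Xi> N \<delta>))
      = (\<Sum>\<sigma>s\<in>(UNIV::'i set) \<rightarrow>\<^sub>E perms N. ?ind (\<lambda>i. perm_act N (\<sigma>s i) (\<Xi> N i)))"
    unfolding Delta_sym_def using fS by (simp add: sum.If_cases Int_def)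
  hence "gamma_sym \<mu> \<Xi> N \<delta> = (1 / orbit_volume N) * (\<Sum>u\<in>orbit_tuples N. ?ind u)"
    unfolding gamma_sym_def orbit_volume_def orbit_tuples_def
    using average_perm_tuples_orbits[OF Xi_PiE, of N ?ind] by simp
  also have "(\<Sum>u\<in>orbit_tuples N. ?ind u) = real (card (good_tuples N \<delta>))"
    using finite_orbit_tuples by (simp add: sum.If_cases Int_def good_tuples_def)
  finally show ?thesis by simp
qed

definition avg_exp :: "(('i \<Rightarrow> 'a) \<Rightarrow> real) \<Rightarrow> nat \<Rightarrow> real" where
  "avg_exp h N = (1 / orbit_volume N) * (\<Sum>u\<in>orbit_tuples N. exp (\<Sum>j<N. h (combine N u j)))"

lemma P_sym_eq: "P_sym h \<Xi> = limsup (\<lambda>N. ereal (1 / real N * ln (avg_exp h N)))"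
proof -
  have "(1 / (fact N) ^ CARD('i)) * (\<Sum>\<sigma>s\<in>(UNIV::'i set) \<rightarrow>\<^sub>E perms N.
         exp (\<Sum>j<N. h (combine N (\<lambda>i. perm_act N (\<sigma>s i) (\<Xi> N i)) j))) = avg_exp h N" for N
    unfolding avg_exp_def orbit_volume_def orbit_tuples_def
    by (rule average_perm_tuples_orbits[OF Xi_PiE, where F="\<lambda>u. exp (\<Sum>j<N. h (combine N u j))"])
  thus ?thesis unfolding P_sym_def by simp
qed

lemma avg_exp_pos: "avg_exp h N > 0"
proof -
  have "(\<Sum>u\<in>orbit_tuples N. exp (\<Sum>j<N. h (combine N u j))) > 0"
    using Xi_in_orbit_tuples finite_orbit_tuples by (intro sum_pos) auto
  thus ?thesis unfolding avg_exp_def using orbit_volume_pos by simp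
qed

text \<open>Upper estimate: orbit tuples embed into all sequences of tuples, whose exponential sum
  factorises into \<open>Z(h)^N\<close>.\<close>

lemma sum_exp_orbit_tuples_le:
  "(\<Sum>u\<in>orbit_tuples N. exp (\<Sum>j<N. h (combine N u j))) \<le> partition_sum h ^ N"
proof -
  have "(\<Sum>u\<in>orbit_tuples N. exp (\<Sum>j<N. h (combine N u j)))
      \<le> (\<Sum>y\<in>{..<N} \<rightarrow>\<^sub>E UNIV. exp (\<Sum>j<N. h (y j)))"
    unfolding orbit_tuples_def by (rule sum_orbit_tuples_le[where w="\<lambda>y. exp (\<Sum>j<N. h (y j))"]) simp
  also have "\<dots> = partition_sum h ^ N" unfolding partition_sum_def by (rule sum_exp_sequences)
  finally show ?thesis .
qed

text \<open>Chebyshev-type estimate: every good tuple contributes at least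
  \<open>exp (N (\<mu>(h) - \<delta> \<parallel>h\<parallel>\<^sub>1))\<close>.\<close>

lemma card_good_tuples_exp_le:
  assumes "N > 0"
  shows "real (card (good_tuples N \<delta>)) * exp (real N * (mean \<mu> h - \<delta> * l1_norm h))
       \<le> (\<Sum>u\<in>orbit_tuples N. exp (\<Sum>j<N. h (combine N u j)))"
proof -
  have exp_lower: "real N * (mean \<mu> h - \<delta> * l1_norm h) \<le> (\<Sum>j<N. h (y j))"
    if "y \<in> Delta \<mu> N \<delta>" for y
    unfolding sum_eq_seq_type[OF assms] mean_def l1_norm_def
    using seq_type_average_lower[OF that] assms by (intro mult_left_mono) auto
  have "real (card (good_tuples N \<delta>)) * exp (real N * (mean \<mu> h - \<delta> * l1_norm h))
      = (\<Sum>u\<in>good_tuples N \<delta>. exp (real N * (mean \<mu> h - \<delta> * l1_norm h)))" by simp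
  also have "\<dots> \<le> (\<Sum>u\<in>good_tuples N \<delta>. exp (\<Sum>j<N. h (combine N u j)))"
    by (intro sum_mono) (use exp_lower in \<open>auto simp: good_tuples_def\<close>)
  also have "\<dots> \<le> (\<Sum>u\<in>orbit_tuples N. exp (\<Sum>j<N. h (combine N u j)))"
    by (rule sum_mono2[OF finite_orbit_tuples]) (auto simp: good_tuples_def)
  finally show ?thesis .
qed

definition marginal_defect :: "nat \<Rightarrow> real" where
  "marginal_defect N = (\<Sum>i\<in>UNIV. \<Sum>t\<in>UNIV. \<bar>seq_type N (\<Xi> N i) t - marginal \<mu> i t\<bar>)"

lemma marginal_defect_nonneg: "marginal_defect N \<ge> 0"
  unfolding marginal_defect_def by (intro sum_nonneg) auto

lemma marginal_defect_bound: "\<bar>seq_type N (\<Xi> N i) t - marginal \<mu> i t\<bar> \<le> marginal_defect N"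
proof -
  have "\<bar>seq_type N (\<Xi> N i) t - marginal \<mu> i t\<bar>
      \<le> (\<Sum>t\<in>UNIV. \<bar>seq_type N (\<Xi> N i) t - marginal \<mu> i t\<bar>)"
    by (rule member_le_sum) auto
  also have "\<dots> \<le> marginal_defect N" unfolding marginal_defect_def
    by (rule member_le_sum[of i UNIV "\<lambda>i. \<Sum>t\<in>UNIV. \<bar>seq_type N (\<Xi> N i) t - marginal \<mu> i t\<bar>"])
       (auto intro: sum_nonneg)
  finally show ?thesis .
qed

lemma marginal_defect_tendsto: "marginal_defect \<longlonglongrightarrow> 0"
proof -
  have "(\<lambda>N. seq_type N (\<Xi> N i) t - marginal \<mu> i t) \<longlonglongrightarrow> 0" for i t
    using Xi_type_tendsto by (rule LIM_zero)
  hence "marginal_defect \<longlonglongrightarrow> (\<Sum>i\<in>(UNIV::'i set). \<Sum>t\<in>(UNIV::'a set). \<bar>0::real\<bar>)"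
    unfolding marginal_defect_def by (intro tendsto_sum tendsto_rabs)
  thus ?thesis by simp
qed

lemma joint_multisets:
  assumes N: "N > 0"
  shows "\<exists>M. size M = N \<and> (\<forall>i. image_mset (\<lambda>x. x i) M = mset (map (\<Xi> N i) [0..<N])) \<and>
           (\<forall>x. \<bar>real (count M x) / real N - \<mu> x\<bar>
                 \<le> (1 + real CARD('i \<Rightarrow> 'a)) * (marginal_defect N + 1 / real N))"
proof (rule joint_multiset_exists[OF nonneg sum_one N marginal_defect_nonneg])
  show "size (mset (map (\<Xi> N i) [0..<N])) = N" for i by simp
  fix i t
  have "marginal \<mu> i t - marginal_defect N \<le> seq_type N (\<Xi> N i) t"
    using marginal_defect_bound[of N i t] by linarith
  thus "real N * (marginal \<mu> i t - marginal_defect N) \<le> real (count (mset (map (\<Xi> N i) [0..<N])) t)"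
    using N unfolding seq_type_mset by (simp add: field_simps)
qed

lemma joint_seq_exists:
  "\<exists>y. (\<forall>N. y N \<in> {..<N} \<rightarrow>\<^sub>E UNIV) \<and>
       (\<forall>N i. image_mset (\<lambda>x. x i) (mset (map (y N) [0..<N])) = mset (map (\<Xi> N i) [0..<N])) \<and>
       (\<forall>x. (\<lambda>N. seq_type N (y N) x) \<longlonglongrightarrow> \<mu> x)"
proof -
  define C where "C N i = mset (map (\<Xi> N i) [0..<N])" for N i
  define b where "b N = (1 + real CARD('i \<Rightarrow> 'a)) * (marginal_defect N + 1 / real N)" for N
  define P where "P N M \<longleftrightarrow> size M = N \<and> (\<forall>i. image_mset (\<lambda>x. x i) M = C N i) \<and>
      (\<forall>x. \<bar>real (count M x) / real N - \<mu> x\<bar> \<le> b N)" for N M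
  have "\<exists>M. 0 < N \<longrightarrow> P N M" for N
    using joint_multisets unfolding P_def C_def b_def by blast
  from choice[OF allI[OF this]] obtain M where "\<forall>N. 0 < N \<longrightarrow> P N (M N)" ..
  hence M: "\<And>N. 0 < N \<Longrightarrow> P N (M N)" by simp
  define y where "y N = seq_of_mset N (M N)" for N
  have my: "mset (map (y N) [0..<N]) = M N" if "N > 0" for N
    unfolding y_def using M[OF that] by (intro mset_seq_of_mset) (simp add: P_def)
  have marg: "image_mset (\<lambda>x. x i) (mset (map (y N) [0..<N])) = C N i" for N i
  proof (cases "N = 0")
    case True thus ?thesis by (simp add: C_def)
  next
    case False
    hence "P N (M N)" by (intro M) simp
    thus ?thesis using my False unfolding P_def by simp
  qed
  have lim: "(\<lambda>N. seq_type N (y N) x) \<longlonglongrightarrow> \<mu> x" for x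
  proof -
    have "b \<longlonglongrightarrow> (1 + real CARD('i \<Rightarrow> 'a)) * (0 + 0)"
      unfolding b_def by (intro tendsto_intros marginal_defect_tendsto lim_1_over_n)
    hence b0: "b \<longlonglongrightarrow> 0" by simp
    have ev: "\<forall>\<^sub>F N in sequentially. norm (seq_type N (y N) x - \<mu> x) \<le> b N"
    proof (rule eventually_sequentiallyI[of 1])
      fix N :: nat assume "1 \<le> N"
      hence PN: "P N (M N)" and my': "mset (map (y N) [0..<N]) = M N" using M my by simp_all
      have "\<bar>real (count (M N) x) / real N - \<mu> x\<bar> \<le> b N" using PN unfolding P_def by blast
      moreover have "seq_type N (y N) x = real (count (M N) x) / real N"
        unfolding seq_type_mset my' ..
      ultimately show "norm (seq_type N (y N) x - \<mu> x) \<le> b N" by simp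
    qed
    have "(\<lambda>N. seq_type N (y N) x - \<mu> x) \<longlonglongrightarrow> 0" by (rule Lim_null_comparison[OF ev b0])
    thus ?thesis by (rule LIM_zero_cancel)
  qed
  have "y N \<in> {..<N} \<rightarrow>\<^sub>E UNIV" for N unfolding y_def by (rule seq_of_mset_PiE)
  thus ?thesis using marg lim unfolding C_def by blast
qed

definition joint_seq :: "nat \<Rightarrow> nat \<Rightarrow> 'i \<Rightarrow> 'a" where
  "joint_seq = (SOME y. (\<forall>N. y N \<in> {..<N} \<rightarrow>\<^sub>E UNIV) \<and>
       (\<forall>N i. image_mset (\<lambda>x. x i) (mset (map (y N) [0..<N])) = mset (map (\<Xi> N i) [0..<N])) \<and>
       (\<forall>x. (\<lambda>N. seq_type N (y N) x) \<longlonglongrightarrow> \<mu> x))"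

lemma joint_seq_props:
  "(\<forall>N. joint_seq N \<in> {..<N} \<rightarrow>\<^sub>E UNIV) \<and>
   (\<forall>N i. image_mset (\<lambda>x. x i) (mset (map (joint_seq N) [0..<N])) = mset (map (\<Xi> N i) [0..<N])) \<and>
   (\<forall>x. (\<lambda>N. seq_type N (joint_seq N) x) \<longlonglongrightarrow> \<mu> x)"
  unfolding joint_seq_def by (rule someI_ex[OF joint_seq_exists])

lemma joint_seq_PiE: "joint_seq N \<in> {..<N} \<rightarrow>\<^sub>E UNIV"
  using joint_seq_props by blast

lemma joint_seq_marginals:
  "image_mset (\<lambda>x. x i) (mset (map (joint_seq N) [0..<N])) = mset (map (\<Xi> N i) [0..<N])"
  using joint_seq_props by blast

lemma joint_seq_type_tendsto: "(\<lambda>N. seq_type N (joint_seq N) x) \<longlonglongrightarrow> \<mu> x"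
  using joint_seq_props by blast

text \<open>Once the type of \<open>Y(N)\<close> is \<open>\<delta>\<close>-close to \<open>\<mu>\<close>, its whole orbit consists of good tuples
  (after splitting into coordinates).\<close>

lemma card_orbit_joint_seq_le:
  assumes "\<delta> > 0"
  shows "\<forall>\<^sub>F N in sequentially. N > 0 \<and> card (orbit N (joint_seq N)) \<le> card (good_tuples N \<delta>)"
proof -
  have "\<forall>\<^sub>F N in sequentially. \<forall>x. dist (seq_type N (joint_seq N) x) (\<mu> x) < \<delta>"
    by (intro eventually_all_finite tendstoD[OF joint_seq_type_tendsto assms])
  moreover have "\<forall>\<^sub>F N in sequentially. N > 0" by (rule eventually_gt_at_top)
  ultimately show ?thesis
  proof eventually_elim
    case (elim N)
    let ?M = "mset (map (joint_seq N) [0..<N])"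
    have "card (seqs_of_type N ?M) \<le> card (good_tuples N \<delta>)"
      unfolding good_tuples_def orbit_tuples_def
    proof (rule card_seqs_of_type_le_orbit_tuples[OF Xi_PiE joint_seq_marginals,
          where P="\<lambda>y. y \<in> Delta \<mu> N \<delta>"])
      fix y assume y: "y \<in> seqs_of_type N ?M"
      hence yP: "y \<in> {..<N} \<rightarrow>\<^sub>E UNIV" and m: "mset (map y [0..<N]) = ?M"
        by (auto simp: seqs_of_type_def)
      have "\<bar>seq_type N y t - \<mu> t\<bar> < \<delta>" for t
        using elim(1) unfolding seq_type_mset m by (simp add: dist_real_def)
      thus "y \<in> Delta \<mu> N \<delta>" unfolding Delta_def using yP by blast
    qed
    thus ?case using elim(2) orbit_eq_seqs_of_type[OF joint_seq_PiE] by simp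
  qed
qed

lemma lower_rate_tendsto:
  "(\<lambda>N. ln (real (card (orbit N (joint_seq N)))) / real N - ln (orbit_volume N) / real N)
     \<longlonglongrightarrow> entropy \<mu> - marginal_entropy"
  by (intro tendsto_diff ln_card_orbit_tendsto[OF joint_seq_PiE joint_seq_type_tendsto]
      ln_orbit_volume_tendsto)

lemma ln_card_good_tuples_le:
  assumes N: "N > 0" and pos: "card (good_tuples N \<delta>) > 0"
  shows "ln (real (card (good_tuples N \<delta>)))
       \<le> real N * (ln (partition_sum h) - mean \<mu> h + \<delta> * l1_norm h)"
proof -
  let ?c = "real (card (good_tuples N \<delta>))" and ?a = "mean \<mu> h - \<delta> * l1_norm h"
  have "?c * exp (real N * ?a) \<le> partition_sum h ^ N"
    using card_good_tuples_exp_le[OF N] sum_exp_orbit_tuples_le by (rule order.trans)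
  hence "ln (?c * exp (real N * ?a)) \<le> ln (partition_sum h ^ N)"
    using pos partition_sum_pos[of h] by (subst ln_le_cancel_iff) auto
  thus ?thesis using pos partition_sum_pos[of h] by (simp add: ln_mult ln_realpow algebra_simps)
qed

lemma ln_card_orbit_joint_seq_le_ln_avg_exp:
  assumes N: "N > 0" and le: "card (orbit N (joint_seq N)) \<le> card (good_tuples N \<delta>)"
  shows "ln (real (card (orbit N (joint_seq N)))) + real N * (mean \<mu> h - \<delta> * l1_norm h)
           - ln (orbit_volume N) \<le> ln (avg_exp h N)"
proof -
  let ?co = "real (card (orbit N (joint_seq N)))" and ?a = "mean \<mu> h - \<delta> * l1_norm h"
  have co: "?co > 0" using card_orbit_pos[OF joint_seq_PiE] by simp
  have "?co * exp (real N * ?a) \<le> real (card (good_tuples N \<delta>)) * exp (real N * ?a)"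
    using le by (intro mult_right_mono) auto
  also have "\<dots> \<le> (\<Sum>u\<in>orbit_tuples N. exp (\<Sum>j<N. h (combine N u j)))"
    by (rule card_good_tuples_exp_le[OF N])
  finally have "?co * exp (real N * ?a) / orbit_volume N \<le> avg_exp h N"
    unfolding avg_exp_def using orbit_volume_pos[of N] by (simp add: divide_right_mono)
  hence "ln (?co * exp (real N * ?a) / orbit_volume N) \<le> ln (avg_exp h N)"
    using avg_exp_pos[of h N] co orbit_volume_pos[of N] by (subst ln_le_cancel_iff) auto
  thus ?thesis using co orbit_volume_pos[of N] by (simp add: ln_div ln_mult_pos[OF co exp_gt_zero])
qed

definition rate :: "real \<Rightarrow> ereal" where
  "rate \<delta> = limsup (\<lambda>N. ereal (1 / real N) * eln (gamma_sym \<mu> \<Xi> N \<delta>))"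

lemma rate_lower:
  assumes "\<delta> > 0"
  shows "ereal (entropy \<mu> - marginal_entropy) \<le> rate \<delta>"
  unfolding rate_def
proof (rule tendsto_le_Limsup[OF lower_rate_tendsto])
  show "\<forall>\<^sub>F N in sequentially.
          ereal (ln (real (card (orbit N (joint_seq N)))) / real N - ln (orbit_volume N) / real N)
          \<le> ereal (1 / real N) * eln (gamma_sym \<mu> \<Xi> N \<delta>)"
    using card_orbit_joint_seq_le[OF assms]
  proof eventually_elim
    case (elim N)
    let ?co = "real (card (orbit N (joint_seq N)))" and ?g = "gamma_sym \<mu> \<Xi> N \<delta>"
    have co: "?co > 0" using card_orbit_pos[OF joint_seq_PiE] by simp
    have "?co / orbit_volume N \<le> ?g"
      unfolding gamma_sym_eq using elim orbit_volume_pos[of N] by (intro divide_right_mono) auto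
    moreover have "?co / orbit_volume N > 0" using co orbit_volume_pos[of N] by simp
    ultimately have g: "?g > 0" and "ln (?co / orbit_volume N) \<le> ln ?g"
      by (auto simp del: ln_div)
    hence "ln ?co - ln (orbit_volume N) \<le> ln ?g"
      using co orbit_volume_pos[of N] by (simp add: ln_div)
    hence "(ln ?co - ln (orbit_volume N)) / real N \<le> ln ?g / real N"
      by (intro divide_right_mono) auto
    thus ?case using g(1) by (simp add: eln_def diff_divide_distrib)
  qed
qed

lemma rate_upper:
  assumes "\<delta> > 0"
  shows "rate \<delta> \<le> ereal (ln (partition_sum h) - mean \<mu> h + \<delta> * l1_norm h - marginal_entropy)"
  unfolding rate_def
proof (rule Limsup_le_tendsto)
  show "(\<lambda>N. ln (partition_sum h) - mean \<mu> h + \<delta> * l1_norm h - ln (orbit_volume N) / real N)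
          \<longlonglongrightarrow> ln (partition_sum h) - mean \<mu> h + \<delta> * l1_norm h - marginal_entropy"
    by (intro tendsto_diff tendsto_const ln_orbit_volume_tendsto)
  show "\<forall>\<^sub>F N in sequentially. ereal (1 / real N) * eln (gamma_sym \<mu> \<Xi> N \<delta>)
          \<le> ereal (ln (partition_sum h) - mean \<mu> h + \<delta> * l1_norm h - ln (orbit_volume N) / real N)"
    using eventually_gt_at_top[of 0]
  proof eventually_elim
    case (elim N)
    show ?case
    proof (cases "gamma_sym \<mu> \<Xi> N \<delta> > 0")
      case False
      thus ?thesis using elim by (simp add: eln_def)
    next
      case True
      hence pos: "card (good_tuples N \<delta>) > 0"
        unfolding gamma_sym_eq using orbit_volume_pos[of N] by (simp add: zero_less_divide_iff)
      have "ln (gamma_sym \<mu> \<Xi> N \<delta>) = ln (real (card (good_tuples N \<delta>))) - ln (orbit_volume N)"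
        unfolding gamma_sym_eq using pos orbit_volume_pos[of N] by (simp add: ln_div)
      hence "ln (gamma_sym \<mu> \<Xi> N \<delta>)
           \<le> real N * (ln (partition_sum h) - mean \<mu> h + \<delta> * l1_norm h) - ln (orbit_volume N)"
        using ln_card_good_tuples_le[OF elim pos] by simp
      hence "ln (gamma_sym \<mu> \<Xi> N \<delta>) / real N
           \<le> ln (partition_sum h) - mean \<mu> h + \<delta> * l1_norm h - ln (orbit_volume N) / real N"
        using elim by (simp add: field_simps)
      thus ?thesis using True by (simp add: eln_def)
    qed
  qed
qed

lemma pressure_upper: "P_sym h \<Xi> \<le> ereal (ln (partition_sum h) - marginal_entropy)"
  unfolding P_sym_eq
proof (rule Limsup_le_tendsto)
  show "(\<lambda>N. ln (partition_sum h) - ln (orbit_volume N) / real N)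
          \<longlonglongrightarrow> ln (partition_sum h) - marginal_entropy"
    by (intro tendsto_diff tendsto_const ln_orbit_volume_tendsto)
  show "\<forall>\<^sub>F N in sequentially.
          ereal (1 / real N * ln (avg_exp h N))
          \<le> ereal (ln (partition_sum h) - ln (orbit_volume N) / real N)"
    using eventually_gt_at_top[of 0]
  proof eventually_elim
    case (elim N)
    have "avg_exp h N \<le> partition_sum h ^ N / orbit_volume N"
      unfolding avg_exp_def using sum_exp_orbit_tuples_le orbit_volume_pos[of N]
      by (simp add: divide_right_mono)
    hence "ln (avg_exp h N) \<le> ln (partition_sum h ^ N / orbit_volume N)"
      using avg_exp_pos[of h N] orbit_volume_pos[of N] partition_sum_pos[of h]
      by (subst ln_le_cancel_iff) auto
    hence "ln (avg_exp h N) \<le> real N * ln (partition_sum h) - ln (orbit_volume N)"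
      using orbit_volume_pos[of N] partition_sum_pos[of h] by (simp add: ln_div ln_realpow)
    thus ?case using elim by (simp add: field_simps)
  qed
qed

lemma pressure_lower_delta:
  assumes "\<delta> > 0"
  shows "ereal (entropy \<mu> - marginal_entropy + (mean \<mu> h - \<delta> * l1_norm h)) \<le> P_sym h \<Xi>"
  unfolding P_sym_eq
proof (rule tendsto_le_Limsup)
  show "(\<lambda>N. ln (real (card (orbit N (joint_seq N)))) / real N - ln (orbit_volume N) / real N
              + (mean \<mu> h - \<delta> * l1_norm h))
          \<longlonglongrightarrow> entropy \<mu> - marginal_entropy + (mean \<mu> h - \<delta> * l1_norm h)"
    by (rule tendsto_add[OF lower_rate_tendsto tendsto_const])
  show "\<forall>\<^sub>F N in sequentially.
          ereal (ln (real (card (orbit N (joint_seq N)))) / real N - ln (orbit_volume N) / real N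
                 + (mean \<mu> h - \<delta> * l1_norm h))
          \<le> ereal (1 / real N * ln (avg_exp h N))"
    using card_orbit_joint_seq_le[OF assms]
  proof eventually_elim
    case (elim N)
    hence "(ln (real (card (orbit N (joint_seq N)))) + real N * (mean \<mu> h - \<delta> * l1_norm h)
              - ln (orbit_volume N)) / real N \<le> ln (avg_exp h N) / real N"
      by (intro divide_right_mono ln_card_orbit_joint_seq_le_ln_avg_exp) auto
    thus ?case using elim by (simp add: field_simps)
  qed
qed

lemma pressure_lower: "ereal (mean \<mu> h + entropy \<mu> - marginal_entropy) \<le> P_sym h \<Xi>"
proof (rule ereal_le_epsilon2)
  fix e :: real assume e: "e > 0"
  define \<delta> where "\<delta> = e / (l1_norm h + 1)"
  have \<delta>: "\<delta> > 0" unfolding \<delta>_def using e l1_norm_nonneg[of h] by simp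
  have "\<delta> * l1_norm h \<le> \<delta> * (l1_norm h + 1)" using \<delta> by simp
  also have "\<dots> = e" unfolding \<delta>_def using l1_norm_nonneg[of h] by (simp add: field_simps)
  finally have "ereal (mean \<mu> h + entropy \<mu> - marginal_entropy)
              \<le> ereal (entropy \<mu> - marginal_entropy + (mean \<mu> h - \<delta> * l1_norm h)) + ereal e"
    by simp
  also have "\<dots> \<le> P_sym h \<Xi> + ereal e"
    by (intro add_right_mono pressure_lower_delta[OF \<delta>])
  finally show "ereal (mean \<mu> h + entropy \<mu> - marginal_entropy) \<le> P_sym h \<Xi> + ereal e" .
qed

lemma I_sym_value: "I_sym \<mu> \<Xi> = ereal (- entropy \<mu> + marginal_entropy)"
proof -
  let ?c = "entropy \<mu> - marginal_entropy"
  have "(rate \<longlongrightarrow> ereal ?c) (at_right 0)"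
  proof (rule tendsto_at_right_0_ereal[OF rate_lower])
    fix \<epsilon> :: real assume e: "\<epsilon> > 0"
    obtain h where mean: "mean \<mu> h = - entropy \<mu>" and Z: "ln (partition_sum h) \<le> \<epsilon> / 2"
      using log_density_test_function[OF nonneg sum_one, of "\<epsilon> / 2"] e by auto
    define \<delta>0 where "\<delta>0 = \<epsilon> / (2 * (l1_norm h + 1))"
    have "\<delta>0 > 0" using e l1_norm_nonneg[of h] by (simp add: \<delta>0_def)
    moreover have "rate \<delta> \<le> ereal (?c + \<epsilon>)" if \<delta>: "0 < \<delta>" "\<delta> < \<delta>0" for \<delta>
    proof -
      have "\<delta> * l1_norm h \<le> \<delta>0 * (l1_norm h + 1)"
        using \<delta> l1_norm_nonneg[of h] by (intro mult_mono) auto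
      also have "\<dots> = \<epsilon> / 2" unfolding \<delta>0_def using l1_norm_nonneg[of h] by (simp add: field_simps)
      finally have "ln (partition_sum h) - mean \<mu> h + \<delta> * l1_norm h - marginal_entropy \<le> ?c + \<epsilon>"
        using mean Z by simp
      thus ?thesis using rate_upper[OF \<delta>(1), of h] by (simp add: order_trans)
    qed
    ultimately show "\<exists>\<delta>0>0. \<forall>\<delta>. 0 < \<delta> \<and> \<delta> < \<delta>0 \<longrightarrow> rate \<delta> \<le> ereal (?c + \<epsilon>)" by blast
  qed
  hence "Lim (at_right 0) rate = ereal ?c" by (rule tendsto_Lim[rotated]) simp
  moreover have "(\<lambda>\<delta>. limsup (\<lambda>N. ereal (1 / real N) * eln (gamma_sym \<mu> \<Xi> N \<delta>))) = rate"
    by (rule ext) (simp add: rate_def)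
  ultimately show ?thesis unfolding I_sym_def by simp
qed

lemma calI_sym_le: "calI_sym \<mu> \<Xi> \<le> ereal (- entropy \<mu> + marginal_entropy)"
  unfolding calI_sym_def
proof (rule SUP_least)
  fix h :: "('i \<Rightarrow> 'a) \<Rightarrow> real"
  have "ereal (\<Sum>x\<in>UNIV. h x * \<mu> x) - P_sym h \<Xi>
      \<le> ereal (mean \<mu> h) - ereal (mean \<mu> h + entropy \<mu> - marginal_entropy)"
    unfolding mean_def[symmetric] by (rule ereal_minus_mono[OF order.refl pressure_lower])
  thus "ereal (\<Sum>x\<in>UNIV. h x * \<mu> x) - P_sym h \<Xi> \<le> ereal (- entropy \<mu> + marginal_entropy)"
    by simp
qed

text \<open>Lower bound for \<open>calI_sym\<close>: the log-density test functions come arbitrarily close.\<close>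

lemma calI_sym_ge: "ereal (- entropy \<mu> + marginal_entropy) \<le> calI_sym \<mu> \<Xi>"
proof (rule ereal_le_epsilon2)
  fix e :: real assume e: "e > 0"
  obtain h where mean: "mean \<mu> h = - entropy \<mu>" and Z: "ln (partition_sum h) \<le> e"
    using log_density_test_function[OF nonneg sum_one e] by blast
  have "ereal (- entropy \<mu> + marginal_entropy - e)
      \<le> ereal (mean \<mu> h) - ereal (ln (partition_sum h) - marginal_entropy)"
    using mean Z by simp
  also have "\<dots> \<le> ereal (mean \<mu> h) - P_sym h \<Xi>"
    by (rule ereal_minus_mono[OF order.refl pressure_upper])
  also have "\<dots> \<le> calI_sym \<mu> \<Xi>"
    unfolding calI_sym_def mean_def by (rule SUP_upper) simp
  finally have "ereal (- entropy \<mu> + marginal_entropy - e) + ereal e \<le> calI_sym \<mu> \<Xi> + ereal e"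
    by (rule add_right_mono)
  thus "ereal (- entropy \<mu> + marginal_entropy) \<le> calI_sym \<mu> \<Xi> + ereal e" by simp
qed

end

theorem theorem4p5:
  fixes \<mu> :: "('i::finite \<Rightarrow> 'a::{finite,linorder}) \<Rightarrow> real"
    and \<Xi> :: "nat \<Rightarrow> 'i \<Rightarrow> nat \<Rightarrow> 'a"
  assumes "is_prob \<mu>"
    and "approx_seq (marginal \<mu>) \<Xi>"
  shows "calI_sym \<mu> \<Xi> = I_sym \<mu> \<Xi> \<and>
         I_sym \<mu> \<Xi> = ereal (- entropy \<mu> + (\<Sum>i\<in>UNIV. entropy (marginal \<mu> i)))"
proof -
  interpret marginal_approximation \<mu> \<Xi> using assms by unfold_locales
  have "I_sym \<mu> \<Xi> = ereal (- entropy \<mu> + marginal_entropy)" by (rule I_sym_value)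
  moreover have "calI_sym \<mu> \<Xi> = ereal (- entropy \<mu> + marginal_entropy)"
    using calI_sym_le calI_sym_ge by (rule antisym)
  ultimately show ?thesis unfolding marginal_entropy_def by simp
qed

end
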